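(* Consider the hybrid system $\dot x\in F(x)$, $x\in C$; $x^+\in G(x)$, $x\in D$, with $C,D\subseteq\mathbb{R}^n$, $F,G:\mathbb{R}^n\rightrightarrows\mathbb{R}^n$ satisfying the hybrid basic conditions (A1)–(A3) below, and a $t$-complete solution $\phi^\star$. Suppose: (i) $G(D)\cap D=\emptyset$, $G(D)\subseteq C$, and $G$ is single-valued and proper; (ii) $F(x)\cap T_C(x)=\emptyset$ for all $x\in C\cap D$; (iii) $-F(x)\cap T_C(x)=\emptyset$ for all $x\in C\cap G(D)$; (iv) either $D$ is bounded or $\phi^\star$ is bounded. If $\phi^\star$ is stable (respectively asymptotically stable) with respect to $\rho_{\mathcal A}$, then $\phi^\star$ is stable (respectively asymptotically stable) in graphical sense.
   Context: Notation: Euclidean norm $\|\cdot\|$, $\mathcal B_s=\{x:\|x\|\le s\}$, $\operatorname{dom}F=\{x:F(x)\ne\emptyset\}$. (A1) $C,D$ closed; (A2) $F$ outer semicontinuous and locally bounded relative to $C$, $C\subseteq\operatorname{dom}F$, $F(x)$ convex for $x\in C$; (A3) $G$ outer semicontinuous and locally bounded relative to $D$, $D\subseteq\operatorname{dom}G$. Solutions are defined on hybrid time domains $E\subseteq\mathbb{R}_{\ge0}\times\mathbb{N}$ (sets whose truncations are finite unions $\bigcup_j[t_j,t_{j+1}]\times\{j\}$, $0=t_0\le t_1\le\cdots$), with $t\mapsto\phi(t,j)$ locally absolutely continuous, $\phi(0,0)\in C\cup D$, flowing in $C$ with $\dot\phi\in F(\phi)$ a.e. on intervals of flow, and with $\phi(t,j)\in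 D$, $\phi(t,j+1)\in G(\phi(t,j))$ whenever $(t,j),(t,j+1)\in\operatorname{dom}\phi$. A solution is maximal if it cannot be extended, $t$-complete if $\sup_{(t,j)\in\operatorname{dom}\phi}t=\infty$, bounded if $\sup\|\phi(t,j)\|<\infty$. $T_C(x)$ is the Bouligand tangent cone; $G$ proper means preimages of compact sets are compact. $\mathcal A=\{(x_1,x_2)\in(C\cup D\cup G(D))^2: x_1=x_2, \text{ or } (x_2\in D\wedge x_1\in G(x_2)), \text{ or } (x_1\in D\wedge x_2\in G(x_1))\}$, $\rho_{\mathcal A}(x,y)=\inf_{(u,v)\in\mathcal A}\|(x-u,y-v)\|$. Stable with respect to $\rho_{\mathcal A}$: for every $\varepsilon_w>0$ there is $\delta_w>0$ such that every maximal solution $\phi$ with $\rho_{\mathcal A}(\phi^\star(0,0),\phi(0,0))<\delta_w$ satisfies (a) for all $(t,j)\in\operatorname{dom}\phi^\star$ there is $(t,j')\in\operatorname{dom}\phi$ with $\rho_{\mathcal A}(\phi^\star(t,j),\phi(t,j'))<\varepsilon_w$, and (b) for all $(t,j')\in\operatorname{dom}\phi$ there is $(t,j)\in\operatorname{dom}\phi^\star$ with $\rho_{\mathcal A}(\phi^\star(t,j),\phi(t,j'))<\varepsilon_w$. Asymptotically stable w.r.t. $\rho_{\mathcal A}$: in addition there is $r_w>0$ such that for every $\varepsilon_w>0$ and every maximal $\phi$ with $\rho_{\mathcal A}(\phi^\star(0,0),\phi(0,0))<r_w$ there is $T_w\ge0$ such that (a) holds for all $(t,j)\in\operatorname{dom}\phi^\star$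 with $t\ge T_w$ and (b) holds for all $(t,j')\in\operatorname{dom}\phi$ with $t\ge T_w$. Stable in graphical sense: for every $\varepsilon>0$ there is $\delta>0$ such that every maximal solution $\phi$ with $\|\phi^\star(0,0)-\phi(0,0)\|<\delta$ satisfies (c) for all $(t,j)\in\operatorname{dom}\phi^\star$ there is $(t',j')\in\operatorname{dom}\phi$ with $|t-t'|<\varepsilon$ and $\|\phi^\star(t,j)-\phi(t',j')\|<\varepsilon$, and (d) for all $(t',j')\in\operatorname{dom}\phi$ there is $(t,j)\in\operatorname{dom}\phi^\star$ with $|t-t'|<\varepsilon$ and $\|\phi^\star(t,j)-\phi(t',j')\|<\varepsilon$. Asymptotically stable in graphical sense: in addition there is $r>0$ such that for every $\varepsilon>0$ and every maximal $\phi$ with $\|\phi^\star(0,0)-\phi(0,0)\|<r$ there is $T\ge0$ such that (c) holds for all $(t,j)\in\operatorname{dom}\phi^\star$ with $t\ge T$ and (d) holds for all $(t',j')\in\operatorname{dom}\phi$ with $t'\ge T$. *)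

theory Defs
  imports "HOL-Analysis.Analysis"
begin

definition osc_rel :: "('a::metric_space \<Rightarrow> 'b::metric_space set) \<Rightarrow> 'a set \<Rightarrow> bool" where
  "osc_rel M S \<longleftrightarrow> (\<forall>x\<in>S. \<forall>xs ys y. (\<forall>i. xs i \<in> S \<and> ys i \<in> M (xs i)) \<and>
       xs \<longlonglongrightarrow> x \<and> ys \<longlonglongrightarrow> y \<longrightarrow> y \<in> M x)"

definition locally_bounded_rel :: "('a::metric_space \<Rightarrow> 'b::metric_space set) \<Rightarrow> 'a set \<Rightarrow> bool" where
  "locally_bounded_rel M S \<longleftrightarrow>
     (\<forall>x\<in>S. \<exists>U. open U \<and> x \<in> U \<and> bounded (\<Union>z\<in>U \<inter> S. M z))"

definition dom_sv :: "('a \<Rightarrow> 'b set) \<Rightarrow> 'a set" where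
  "dom_sv M = {x. M x \<noteq> {}}"

definition tangent_cone :: "'a::real_normed_vector set \<Rightarrow> 'a \<Rightarrow> 'a set" where
  "tangent_cone S x = {v. \<exists>\<tau> w. (\<forall>i. \<tau> i > 0 \<and> x + \<tau> i *\<^sub>R w i \<in> S) \<and>
                            \<tau> \<longlonglongrightarrow> 0 \<and> w \<longlonglongrightarrow> v}"

definition hybrid_basic_conditions ::
  "'a::euclidean_space set \<Rightarrow> ('a \<Rightarrow> 'a set) \<Rightarrow> 'a set \<Rightarrow> ('a \<Rightarrow> 'a set) \<Rightarrow> bool" where
  "hybrid_basic_conditions C F D G \<longleftrightarrow>
     closed C \<and> closed D \<and>
     osc_rel F C \<and> locally_bounded_rel F C \<and> C \<subseteq> dom_sv F \<and> (\<forall>x\<in>C. convex (F x)) \<and>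
     osc_rel G D \<and> locally_bounded_rel G D \<and> D \<subseteq> dom_sv G"

definition hybrid_time_domain :: "(real \<times> nat) set \<Rightarrow> bool" where
  "hybrid_time_domain E \<longleftrightarrow> E \<noteq> {} \<and>
     (\<forall>(T, J)\<in>E. \<exists>t :: nat \<Rightarrow> real. t 0 = 0 \<and> (\<forall>j\<le>J. t j \<le> t (Suc j)) \<and>
        E \<inter> ({0..T} \<times> {0..J}) = (\<Union>j\<le>J. {t j..t (Suc j)} \<times> {j}))"

definition time_slice :: "(real \<times> nat) set \<Rightarrow> nat \<Rightarrow> real set" where
  "time_slice E j = {t. (t, j) \<in> E}"

definition abs_continuous_on :: "real set \<Rightarrow> (real \<Rightarrow> 'a::real_normed_vector) \<Rightarrow> bool" where
  "abs_continuous_on S f \<longleftrightarrow>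
     (\<forall>\<epsilon>>0. \<exists>\<delta>>0. \<forall>(n::nat) (a::nat \<Rightarrow> real) b.
        (\<forall>k<n. a k \<le> b k \<and> {a k..b k} \<subseteq> S) \<and>
        (\<forall>k<n. \<forall>l<n. k \<noteq> l \<longrightarrow> {a k<..<b k} \<inter> {a l<..<b l} = {}) \<and>
        (\<Sum>k<n. b k - a k) < \<delta> \<longrightarrow> (\<Sum>k<n. norm (f (b k) - f (a k))) < \<epsilon>)"

definition locally_abs_continuous_on :: "real set \<Rightarrow> (real \<Rightarrow> 'a::real_normed_vector) \<Rightarrow> bool" where
  "locally_abs_continuous_on I f \<longleftrightarrow> (\<forall>a b. {a..b} \<subseteq> I \<longrightarrow> abs_continuous_on {a..b} f)"

text \<open>A solution is a pair (E, phi) of a hybrid time domain E and a function phi whose values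
  are relevant only on E.\<close>
definition is_solution ::
  "'a::euclidean_space set \<Rightarrow> ('a \<Rightarrow> 'a set) \<Rightarrow> 'a set \<Rightarrow> ('a \<Rightarrow> 'a set) \<Rightarrow>
   (real \<times> nat) set \<Rightarrow> (real \<times> nat \<Rightarrow> 'a) \<Rightarrow> bool" where
  "is_solution C F D G E \<phi> \<longleftrightarrow>
     hybrid_time_domain E \<and>
     (\<forall>j. locally_abs_continuous_on (time_slice E j) (\<lambda>t. \<phi> (t, j))) \<and>
     \<phi> (0, 0) \<in> C \<union> D \<and>
     (\<forall>j. interior (time_slice E j) \<noteq> {} \<longrightarrow>
        (\<forall>t\<in>interior (time_slice E j). \<phi> (t, j) \<in> C) \<and>
        (AE t in lebesgue. t \<in> time_slice E j \<longrightarrow>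
           (\<exists>v. ((\<lambda>s. \<phi> (s, j)) has_vector_derivative v) (at t) \<and> v \<in> F (\<phi> (t, j))))) \<and>
     (\<forall>t j. (t, j) \<in> E \<and> (t, Suc j) \<in> E \<longrightarrow> \<phi> (t, j) \<in> D \<and> \<phi> (t, Suc j) \<in> G (\<phi> (t, j)))"

definition is_maximal_solution ::
  "'a::euclidean_space set \<Rightarrow> ('a \<Rightarrow> 'a set) \<Rightarrow> 'a set \<Rightarrow> ('a \<Rightarrow> 'a set) \<Rightarrow>
   (real \<times> nat) set \<Rightarrow> (real \<times> nat \<Rightarrow> 'a) \<Rightarrow> bool" where
  "is_maximal_solution C F D G E \<phi> \<longleftrightarrow>
     is_solution C F D G E \<phi> \<and>
     \<not> (\<exists>E' \<psi>. is_solution C F D G E' \<psi> \<and> E \<subset> E' \<and> (\<forall>p\<in>E. \<psi> p = \<phi> p))"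

definition t_complete :: "(real \<times> nat) set \<Rightarrow> bool" where
  "t_complete E \<longleftrightarrow> (\<forall>T. \<exists>(t, j)\<in>E. t \<ge> T)"

definition bounded_arc :: "(real \<times> nat) set \<Rightarrow> (real \<times> nat \<Rightarrow> 'a::real_normed_vector) \<Rightarrow> bool" where
  "bounded_arc E \<phi> \<longleftrightarrow> (\<exists>M. \<forall>p\<in>E. norm (\<phi> p) \<le> M)"

definition jump_image :: "'a set \<Rightarrow> ('a \<Rightarrow> 'a set) \<Rightarrow> 'a set" where
  "jump_image D G = (\<Union>x\<in>D. G x)"

definition setA :: "'a::euclidean_space set \<Rightarrow> 'a set \<Rightarrow> ('a \<Rightarrow> 'a set) \<Rightarrow> ('a \<times> 'a) set" where
  "setA C D G = {(x1, x2). x1 \<in> C \<union> D \<union> jump_image D G \<and> x2 \<in> C \<union> D \<union> jump_image D G \<and>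
      (x1 = x2 \<or> (x2 \<in> D \<and> x1 \<in> G x2) \<or> (x1 \<in> D \<and> x2 \<in> G x1))}"

definition rhoA :: "'a::euclidean_space set \<Rightarrow> 'a set \<Rightarrow> ('a \<Rightarrow> 'a set) \<Rightarrow> 'a \<Rightarrow> 'a \<Rightarrow> real" where
  "rhoA C D G x y = infdist (x, y) (setA C D G)"

definition stable_rho ::
  "'a::euclidean_space set \<Rightarrow> ('a \<Rightarrow> 'a set) \<Rightarrow> 'a set \<Rightarrow> ('a \<Rightarrow> 'a set) \<Rightarrow>
   (real \<times> nat) set \<Rightarrow> (real \<times> nat \<Rightarrow> 'a) \<Rightarrow> bool" where
  "stable_rho C F D G Es \<phi>s \<longleftrightarrow>
     (\<forall>\<epsilon>>0. \<exists>\<delta>>0. \<forall>E \<phi>. is_maximal_solution C F D G E \<phi> \<and>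
         rhoA C D G (\<phi>s (0, 0)) (\<phi> (0, 0)) < \<delta> \<longrightarrow>
         (\<forall>(t, j)\<in>Es. \<exists>j'. (t, j') \<in> E \<and> rhoA C D G (\<phi>s (t, j)) (\<phi> (t, j')) < \<epsilon>) \<and>
         (\<forall>(t, j')\<in>E. \<exists>j. (t, j) \<in> Es \<and> rhoA C D G (\<phi>s (t, j)) (\<phi> (t, j')) < \<epsilon>))"

definition asymptotically_stable_rho ::
  "'a::euclidean_space set \<Rightarrow> ('a \<Rightarrow> 'a set) \<Rightarrow> 'a set \<Rightarrow> ('a \<Rightarrow> 'a set) \<Rightarrow>
   (real \<times> nat) set \<Rightarrow> (real \<times> nat \<Rightarrow> 'a) \<Rightarrow> bool" where
  "asymptotically_stable_rho C F D G Es \<phi>s \<longleftrightarrow> stable_rho C F D G Es \<phi>s \<and>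
     (\<exists>r>0. \<forall>\<epsilon>>0. \<forall>E \<phi>. is_maximal_solution C F D G E \<phi> \<and>
         rhoA C D G (\<phi>s (0, 0)) (\<phi> (0, 0)) < r \<longrightarrow>
         (\<exists>T\<ge>0.
           (\<forall>(t, j)\<in>Es. t \<ge> T \<longrightarrow> (\<exists>j'. (t, j') \<in> E \<and> rhoA C D G (\<phi>s (t, j)) (\<phi> (t, j')) < \<epsilon>)) \<and>
           (\<forall>(t, j')\<in>E. t \<ge> T \<longrightarrow> (\<exists>j. (t, j) \<in> Es \<and> rhoA C D G (\<phi>s (t, j)) (\<phi> (t, j')) < \<epsilon>))))"

definition stable_graphical ::
  "'a::euclidean_space set \<Rightarrow> ('a \<Rightarrow> 'a set) \<Rightarrow> 'a set \<Rightarrow> ('a \<Rightarrow> 'a set) \<Rightarrow>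
   (real \<times> nat) set \<Rightarrow> (real \<times> nat \<Rightarrow> 'a) \<Rightarrow> bool" where
  "stable_graphical C F D G Es \<phi>s \<longleftrightarrow>
     (\<forall>\<epsilon>>0. \<exists>\<delta>>0. \<forall>E \<phi>. is_maximal_solution C F D G E \<phi> \<and>
         norm (\<phi>s (0, 0) - \<phi> (0, 0)) < \<delta> \<longrightarrow>
         (\<forall>(t, j)\<in>Es. \<exists>(t', j')\<in>E. \<bar>t - t'\<bar> < \<epsilon> \<and> norm (\<phi>s (t, j) - \<phi> (t', j')) < \<epsilon>) \<and>
         (\<forall>(t', j')\<in>E. \<exists>(t, j)\<in>Es. \<bar>t - t'\<bar> < \<epsilon> \<and> norm (\<phi>s (t, j) - \<phi> (t', j')) < \<epsilon>))"

definition asymptotically_stable_graphical ::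
  "'a::euclidean_space set \<Rightarrow> ('a \<Rightarrow> 'a set) \<Rightarrow> 'a set \<Rightarrow> ('a \<Rightarrow> 'a set) \<Rightarrow>
   (real \<times> nat) set \<Rightarrow> (real \<times> nat \<Rightarrow> 'a) \<Rightarrow> bool" where
  "asymptotically_stable_graphical C F D G Es \<phi>s \<longleftrightarrow> stable_graphical C F D G Es \<phi>s \<and>
     (\<exists>r>0. \<forall>\<epsilon>>0. \<forall>E \<phi>. is_maximal_solution C F D G E \<phi> \<and>
         norm (\<phi>s (0, 0) - \<phi> (0, 0)) < r \<longrightarrow>
         (\<exists>T\<ge>0.
           (\<forall>(t, j)\<in>Es. t \<ge> T \<longrightarrow>
              (\<exists>(t', j')\<in>E. \<bar>t - t'\<bar> < \<epsilon> \<and> norm (\<phi>s (t, j) - \<phi> (t', j')) < \<epsilon>)) \<and>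
           (\<forall>(t', j')\<in>E. t' \<ge> T \<longrightarrow>
              (\<exists>(t, j)\<in>Es. \<bar>t - t'\<bar> < \<epsilon> \<and> norm (\<phi>s (t, j) - \<phi> (t', j')) < \<epsilon>))))"

end

theory Submission
  imports Defs
begin

text \<open>A solution that is \<open>\<rho>\<^sub>A\<close>-close to \<open>\<phi>\<^sup>\<star>\<close> can be far from it in the usual sense only around jumps,
  where one of the two solutions has already jumped and the other has not; \<open>\<rho>\<^sub>A\<close> then pairs a point
  near some \<open>d \<in> D\<close> with a point near \<open>g d\<close>. Transversality makes this mismatch short: by (ii) no flow
  of a fixed duration \<open>\<sigma>\<close> starts near \<open>D\<close>, so the solution near \<open>d\<close> jumps within time \<open>\<sigma>\<close> and, \<open>g\<close>
  being continuous, lands near \<open>g d\<close>; by (iii) no flow of duration \<open>\<sigma>\<close> ends near \<open>G(D)\<close>, so the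
  solution near \<open>g d\<close> has jumped less than \<open>\<sigma>\<close> ago, from a point that turns out to be near \<open>d\<close>.
  Since \<open>G(D)\<close> is closed and disjoint from \<open>D\<close>, the other ways of being \<open>\<rho>\<^sub>A\<close>-close are excluded by
  separation. Shifting time by less than \<open>\<sigma>\<close> thus turns \<open>\<rho>\<^sub>A\<close>-closeness into graphical closeness.
  Assumption (iv) confines the relevant jump points to a compact set, on which all constants are
  uniform, and the tangent cone conditions become quantitative by compactness.\<close>

section \<open>Absolutely continuous functions\<close>

lemma abs_continuous_on_imp_continuous_on:
  fixes f :: "real \<Rightarrow> 'a::real_normed_vector"
  assumes "abs_continuous_on {a..b} f"
  shows "continuous_on {a..b} f"
  unfolding continuous_on_iff
proof (intro ballI allI impI)
  fix x e assume x: "x \<in> {a..b}" and e: "(e::real) > 0"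
  obtain d where d: "d > 0" and ac: "\<And>n (aa::nat\<Rightarrow>real) bb. (\<forall>k<n. aa k \<le> bb k \<and> {aa k..bb k} \<subseteq> {a..b}) \<and>
        (\<forall>k<n. \<forall>l<n. k \<noteq> l \<longrightarrow> {aa k<..<bb k} \<inter> {aa l<..<bb l} = {}) \<and>
        (\<Sum>k<n. bb k - aa k) < d \<longrightarrow> (\<Sum>k<n. norm (f (bb k) - f (aa k))) < e"
    using assms e unfolding abs_continuous_on_def by meson
  show "\<exists>d>0. \<forall>x'\<in>{a..b}. dist x' x < d \<longrightarrow> dist (f x') (f x) < e"
  proof (intro exI[of _ d] conjI d ballI impI)
    fix y assume y: "y \<in> {a..b}" "dist y x < d"
    have "norm (f (max x y) - f (min x y)) < e"
      using ac[of 1 "\<lambda>_. min x y" "\<lambda>_. max x y"] x y by (auto simp: dist_real_def)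
    then show "dist (f y) (f x) < e"
      by (cases "x \<le> y") (auto simp: dist_norm norm_minus_commute max_def min_def)
  qed
qed

lemma abs_continuous_on_inner:
  fixes f :: "real \<Rightarrow> 'a::euclidean_space"
  assumes "abs_continuous_on S f"
  shows "abs_continuous_on S (\<lambda>t. inner w (f t))"
  unfolding abs_continuous_on_def
proof (intro allI impI)
  fix e :: real assume e: "e > 0"
  define e' where "e' = e / (norm w + 1)"
  have e': "e' > 0" using e by (simp add: e'_def add_nonneg_pos)
  have "norm w * e' = e * (norm w / (norm w + 1))" by (simp add: e'_def)
  also have "\<dots> < e" using e by (simp add: divide_less_eq add_nonneg_pos)
  finally have "norm w * e' < e" .
  obtain d where d: "d > 0" and ac: "\<And>n (aa::nat\<Rightarrow>real) bb. (\<forall>k<n. aa k \<le> bb k \<and> {aa k..bb k} \<subseteq> S) \<and>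
        (\<forall>k<n. \<forall>l<n. k \<noteq> l \<longrightarrow> {aa k<..<bb k} \<inter> {aa l<..<bb l} = {}) \<and>
        (\<Sum>k<n. bb k - aa k) < d \<longrightarrow> (\<Sum>k<n. norm (f (bb k) - f (aa k))) < e'"
    using assms e' unfolding abs_continuous_on_def by meson
  show "\<exists>d>0. \<forall>n (aa::nat\<Rightarrow>real) bb. (\<forall>k<n. aa k \<le> bb k \<and> {aa k..bb k} \<subseteq> S) \<and>
        (\<forall>k<n. \<forall>l<n. k \<noteq> l \<longrightarrow> {aa k<..<bb k} \<inter> {aa l<..<bb l} = {}) \<and>
        (\<Sum>k<n. bb k - aa k) < d \<longrightarrow> (\<Sum>k<n. norm (inner w (f (bb k)) - inner w (f (aa k)))) < e"
  proof (intro exI[of _ d] conjI d allI impI)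
    fix n and aa bb :: "nat \<Rightarrow> real"
    assume intervals: "(\<forall>k<n. aa k \<le> bb k \<and> {aa k..bb k} \<subseteq> S) \<and>
        (\<forall>k<n. \<forall>l<n. k \<noteq> l \<longrightarrow> {aa k<..<bb k} \<inter> {aa l<..<bb l} = {}) \<and>
        (\<Sum>k<n. bb k - aa k) < d"
    have "(\<Sum>k<n. norm (inner w (f (bb k)) - inner w (f (aa k)))) \<le>
          (\<Sum>k<n. norm w * norm (f (bb k) - f (aa k)))"
      by (intro sum_mono) (metis Cauchy_Schwarz_ineq2 inner_diff_right real_norm_def)
    also have "\<dots> = norm w * (\<Sum>k<n. norm (f (bb k) - f (aa k)))"
      by (simp add: sum_distrib_left)
    also have "\<dots> \<le> norm w * e'"
      using ac[of n aa bb] intervals by (intro mult_left_mono) auto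
    also have "\<dots> < e" by fact
    finally show "(\<Sum>k<n. norm (inner w (f (bb k)) - inner w (f (aa k)))) < e" .
  qed
qed

lemma has_real_derivative_straddle:
  fixes g :: "real \<Rightarrow> real"
  assumes "(g has_real_derivative d) (at t)" "e > 0"
  obtains r where "r > 0"
    "\<And>u v. u \<le> t \<Longrightarrow> t \<le> v \<Longrightarrow> v - u < r \<Longrightarrow> g v - g u \<le> (d + e) * (v - u)"
proof -
  from assms(1) have "(g has_derivative (\<lambda>x. x * d)) (at t)"
    by (simp add: has_field_derivative_def mult.commute[of _ d])
  then obtain r where r: "r > 0" and
    approx: "\<And>y. norm (y - t) < r \<Longrightarrow> norm (g y - g t - (y - t) * d) \<le> e * norm (y - t)"
    using assms(2) unfolding has_derivative_at_alt by blast
  show ?thesis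
  proof (rule that[OF r])
    fix u v assume uv: "u \<le> t" "t \<le> v" "v - u < r"
    have "\<bar>g v - g t - (v - t) * d\<bar> \<le> e * (v - t)" "\<bar>g u - g t - (u - t) * d\<bar> \<le> e * (t - u)"
      using approx[of v] approx[of u] uv by simp_all
    then show "g v - g u \<le> (d + e) * (v - u)"
      by (simp add: algebra_simps abs_le_iff)
  qed
qed

lemma tagged_division_of_real_interval:
  assumes "\<D> tagged_division_of {a..b::real}" "(x, K) \<in> \<D>"
  shows "K = {Inf K..Sup K}" "Inf K \<le> Sup K" "x \<in> K" "K \<subseteq> {a..b}"
proof -
  obtain u v where K: "K = cbox u v" using tagged_division_ofD(4)[OF assms] by blast
  have "x \<in> K" "K \<subseteq> {a..b}" using tagged_division_ofD(2,3)[OF assms] by auto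
  then show "K = {Inf K..Sup K}" "Inf K \<le> Sup K" "x \<in> K" "K \<subseteq> {a..b}"
    using K by auto
qed

lemma derivative_bound_gauge:
  fixes g :: "real \<Rightarrow> real"
  assumes der: "\<And>t. t \<in> S \<Longrightarrow> \<exists>d. (g has_real_derivative d) (at t) \<and> d \<le> c" and e: "e > 0"
  obtains \<gamma> where "gauge \<gamma>"
    "\<And>\<D> x K. \<D> tagged_division_of {a..b} \<Longrightarrow> \<gamma> fine \<D> \<Longrightarrow> (x, K) \<in> \<D> \<Longrightarrow> x \<in> S \<Longrightarrow>
       g (Sup K) - g (Inf K) \<le> (c + e) * (Sup K - Inf K)"
proof -
  have "\<exists>r>0. t \<in> S \<longrightarrow> (\<forall>u v. u \<le> t \<longrightarrow> t \<le> v \<longrightarrow> v - u < r \<longrightarrow> g v - g u \<le> (c + e) * (v - u))"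
    for t
  proof (cases "t \<in> S")
    case True
    then obtain d where d: "(g has_real_derivative d) (at t)" "d \<le> c"
      using der by blast
    obtain r where "r > 0"
      and "\<And>u v. u \<le> t \<Longrightarrow> t \<le> v \<Longrightarrow> v - u < r \<Longrightarrow> g v - g u \<le> (d + e) * (v - u)"
      using has_real_derivative_straddle[OF d(1) e] by blast
    moreover have "(d + e) * (v - u) \<le> (c + e) * (v - u)" if "u \<le> v" for u v
      using d(2) that by (intro mult_right_mono) auto
    ultimately show ?thesis by (meson order_trans)
  qed (auto intro: exI[of _ 1])
  then obtain r where r: "\<And>t. r t > 0" and
    bound: "\<And>t u v. t \<in> S \<Longrightarrow> u \<le> t \<Longrightarrow> t \<le> v \<Longrightarrow> v - u < r t \<Longrightarrow> g v - g u \<le> (c + e) * (v - u)"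
    by metis
  show ?thesis
  proof (rule that[of "\<lambda>t. ball t (r t / 2)"])
    show "gauge (\<lambda>t. ball t (r t / 2))" using r by (auto simp: gauge_def)
    fix \<D> x K assume \<D>: "\<D> tagged_division_of {a..b}" "(\<lambda>t. ball t (r t / 2)) fine \<D>" "(x, K) \<in> \<D>"
      and "x \<in> S"
    note K = tagged_division_of_real_interval[OF \<D>(1,3)]
    have "Inf K \<in> K" "Sup K \<in> K" using K(1,2) by (metis atLeastAtMost_iff order_refl)+
    moreover have "K \<subseteq> ball x (r x / 2)" using \<D>(2,3) unfolding fine_def by blast
    ultimately have "Inf K \<in> ball x (r x / 2)" "Sup K \<in> ball x (r x / 2)" by blast+
    moreover have "Inf K \<le> x" "x \<le> Sup K" using K(1,3) by (metis atLeastAtMost_iff)+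
    ultimately have "Sup K - Inf K < r x" "Inf K \<le> x" "x \<le> Sup K" by (auto simp: dist_real_def)
    then show "g (Sup K) - g (Inf K) \<le> (c + e) * (Sup K - Inf K)" using bound \<open>x \<in> S\<close> by blast
  qed
qed

lemma negligible_tagged_length:
  assumes "negligible N" "\<delta> > 0"
  obtains \<gamma> where "gauge \<gamma>" "\<And>\<D>. \<D> tagged_division_of {a..b::real} \<Longrightarrow> \<gamma> fine \<D> \<Longrightarrow>
    (\<Sum>(x, K)\<in>{p \<in> \<D>. fst p \<in> N}. Sup K - Inf K) < \<delta>"
proof -
  have "(indicat_real N has_integral 0) {a..b}" using assms(1) unfolding negligible by blast
  then obtain \<gamma> where "gauge \<gamma>" and \<gamma>: "\<And>\<D>. \<D> tagged_division_of {a..b} \<Longrightarrow> \<gamma> fine \<D> \<Longrightarrow>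
      norm ((\<Sum>(x, K)\<in>\<D>. Henstock_Kurzweil_Integration.content K *\<^sub>R indicat_real N x) - 0) < \<delta>"
    using assms(2) unfolding has_integral_real by meson
  show ?thesis
  proof (rule that[OF \<open>gauge \<gamma>\<close>])
    fix \<D> assume \<D>: "\<D> tagged_division_of {a..b}" "\<gamma> fine \<D>"
    have "finite \<D>" using \<D>(1) by blast
    have "(\<Sum>(x, K)\<in>\<D>. Henstock_Kurzweil_Integration.content K *\<^sub>R indicat_real N x) =
          (\<Sum>p\<in>\<D>. if fst p \<in> N then Sup (snd p) - Inf (snd p) else 0)"
      using tagged_division_of_real_interval[OF \<D>(1)] by (intro sum.cong) (auto simp: indicator_def, metis content_real)
    also have "\<dots> = (\<Sum>(x, K)\<in>{p \<in> \<D>. fst p \<in> N}. Sup K - Inf K)"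
      by (simp add: sum.inter_filter[OF \<open>finite \<D>\<close>] split_beta)
    finally show "(\<Sum>(x, K)\<in>{p \<in> \<D>. fst p \<in> N}. Sup K - Inf K) < \<delta>" using \<gamma>[OF \<D>] by simp
  qed
qed

lemma abs_continuous_on_tagged_subdivision:
  fixes g :: "real \<Rightarrow> real"
  assumes ac: "abs_continuous_on {a..b} g" and e: "e > 0"
  obtains \<delta> where "\<delta> > 0"
    "\<And>\<D> \<D>'. \<D> tagged_division_of {a..b} \<Longrightarrow> \<D>' \<subseteq> \<D> \<Longrightarrow>
       (\<Sum>(x, K)\<in>\<D>'. Sup K - Inf K) < \<delta> \<Longrightarrow> (\<Sum>(x, K)\<in>\<D>'. g (Sup K) - g (Inf K)) < e"
proof -
  obtain \<delta> where \<delta>: "\<delta> > 0" and small: "\<And>n (aa::nat\<Rightarrow>real) bb.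
        (\<forall>k<n. aa k \<le> bb k \<and> {aa k..bb k} \<subseteq> {a..b}) \<Longrightarrow>
        (\<forall>k<n. \<forall>l<n. k \<noteq> l \<longrightarrow> {aa k<..<bb k} \<inter> {aa l<..<bb l} = {}) \<Longrightarrow>
        (\<Sum>k<n. bb k - aa k) < \<delta> \<Longrightarrow> (\<Sum>k<n. norm (g (bb k) - g (aa k))) < e"
    using ac e unfolding abs_continuous_on_def by meson
  show ?thesis
  proof (rule that[OF \<delta>])
    fix \<D> \<D>' assume \<D>: "\<D> tagged_division_of {a..b}" "\<D>' \<subseteq> \<D>"
      and length: "(\<Sum>(x, K)\<in>\<D>'. Sup K - Inf K) < \<delta>"
    have "finite \<D>'" using \<D> finite_subset by blast
    then obtain f where f: "bij_betw f {..<card \<D>'} \<D>'"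
      using bij_betw_from_nat_into_finite by blast
    define n where "n = card \<D>'"
    define aa where "aa k = Inf (snd (f k))" for k
    define bb where "bb k = Sup (snd (f k))" for k
    have reindex: "(\<Sum>k<n. h (f k)) = sum h \<D>'" for h :: "real \<times> real set \<Rightarrow> real"
      using sum.reindex_bij_betw[OF f, of h] by (simp add: n_def)
    have fk: "f k \<in> \<D>" if "k < n" for k
      using f \<D>(2) that unfolding bij_betw_def n_def by auto
    have K: "snd (f k) = {aa k..bb k}" "aa k \<le> bb k" "{aa k..bb k} \<subseteq> {a..b}" if "k < n" for k
      using tagged_division_of_real_interval[OF \<D>(1), of "fst (f k)" "snd (f k)"] fk[OF that]
      by (auto simp: aa_def bb_def)
    have disjoint: "{aa k<..<bb k} \<inter> {aa l<..<bb l} = {}" if "k < n" "l < n" "k \<noteq> l" for k l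
    proof -
      have "f k \<noteq> f l" using f that unfolding bij_betw_def inj_on_def n_def by auto
      then have "interior (snd (f k)) \<inter> interior (snd (f l)) = {}"
        using tagged_division_ofD(5)[OF \<D>(1), of "fst (f k)" "snd (f k)" "fst (f l)" "snd (f l)"]
          fk that by auto
      then show ?thesis using K that by auto
    qed
    have "(\<Sum>k<n. bb k - aa k) = (\<Sum>(x, K)\<in>\<D>'. Sup K - Inf K)"
      by (subst reindex[symmetric]) (simp add: aa_def bb_def split_beta)
    then have "(\<Sum>k<n. norm (g (bb k) - g (aa k))) < e"
      using small[of n aa bb] K disjoint length by auto
    moreover have "(\<Sum>(x, K)\<in>\<D>'. g (Sup K) - g (Inf K)) = (\<Sum>k<n. g (bb k) - g (aa k))"
      by (subst reindex[symmetric]) (simp add: aa_def bb_def split_beta)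
    moreover have "(\<Sum>k<n. g (bb k) - g (aa k)) \<le> (\<Sum>k<n. norm (g (bb k) - g (aa k)))"
      by (intro sum_mono) auto
    ultimately show "(\<Sum>(x, K)\<in>\<D>'. g (Sup K) - g (Inf K)) < e" by linarith
  qed
qed

lemma tagged_division_total_length:
  assumes "\<D> tagged_division_of {a..b::real}" "a \<le> b"
  shows "(\<Sum>(x, K)\<in>\<D>. Sup K - Inf K) = b - a"
proof -
  have "(\<Sum>(x, K)\<in>\<D>. Sup K - Inf K) = (\<Sum>(x, K)\<in>\<D>. Henstock_Kurzweil_Integration.content K)"
    using tagged_division_of_real_interval[OF assms(1)] by (intro sum.cong) (auto, metis content_real)
  also have "\<dots> = b - a"
    using additive_content_tagged_division[of \<D> a b] assms by simp
  finally show ?thesis .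
qed

lemma abs_continuous_on_increment_le:
  fixes g :: "real \<Rightarrow> real"
  assumes ab: "a \<le> b" and ac: "abs_continuous_on {a..b} g" and N: "negligible N"
    and der: "\<And>t. t \<in> {a..b} \<Longrightarrow> t \<notin> N \<Longrightarrow> \<exists>d. (g has_real_derivative d) (at t) \<and> d \<le> c"
  shows "g b - g a \<le> c * (b - a)"
proof (rule field_le_epsilon)
  fix e0 :: real assume "e0 > 0"
  define e where "e = e0 / (b - a + 2)"
  have e: "e > 0" "c * (b - a) + e * (b - a + 2) = c * (b - a) + e0" using \<open>e0 > 0\<close> ab by (auto simp: e_def)
  obtain \<delta>0 where "\<delta>0 > 0" and small_increment: "\<And>\<D> \<D>'. \<D> tagged_division_of {a..b} \<Longrightarrow>
      \<D>' \<subseteq> \<D> \<Longrightarrow> (\<Sum>(x, K)\<in>\<D>'. Sup K - Inf K) < \<delta>0 \<Longrightarrow> (\<Sum>(x, K)\<in>\<D>'. g (Sup K) - g (Inf K)) < e"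
    using abs_continuous_on_tagged_subdivision[OF ac e(1)] by blast
  define \<delta> where "\<delta> = min \<delta>0 (e / (\<bar>c + e\<bar> + 1))"
  have \<delta>: "\<delta> > 0" "\<delta> \<le> \<delta>0" using \<open>\<delta>0 > 0\<close> e by (auto simp: \<delta>_def)
  have "\<delta> * (\<bar>c + e\<bar> + 1) \<le> e"
    by (simp add: \<delta>_def pos_le_divide_eq[symmetric] add_pos_nonneg)
  then have c\<delta>: "\<bar>c + e\<bar> * \<delta> \<le> e" using \<delta> by (simp add: algebra_simps)
  obtain \<gamma>1 where "gauge \<gamma>1" and \<gamma>1: "\<And>\<D>. \<D> tagged_division_of {a..b} \<Longrightarrow> \<gamma>1 fine \<D> \<Longrightarrow>
      (\<Sum>(x, K)\<in>{p \<in> \<D>. fst p \<in> N}. Sup K - Inf K) < \<delta>"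
    using negligible_tagged_length[OF N \<delta>(1)] by blast
  obtain \<gamma>2 where "gauge \<gamma>2" and \<gamma>2: "\<And>\<D> x K. \<D> tagged_division_of {a..b} \<Longrightarrow> \<gamma>2 fine \<D> \<Longrightarrow>
      (x, K) \<in> \<D> \<Longrightarrow> x \<in> {a..b} - N \<Longrightarrow> g (Sup K) - g (Inf K) \<le> (c + e) * (Sup K - Inf K)"
    using derivative_bound_gauge[of "{a..b} - N" g c e a b] der e(1) by (metis Diff_iff)
  obtain \<D> where \<D>: "\<D> tagged_division_of {a..b}" "(\<lambda>x. \<gamma>1 x \<inter> \<gamma>2 x) fine \<D>"
    using fine_division_exists_real[OF gauge_Int[OF \<open>gauge \<gamma>1\<close> \<open>gauge \<gamma>2\<close>]] by blast
  have fine: "\<gamma>1 fine \<D>" "\<gamma>2 fine \<D>" using \<D>(2) by (auto simp: fine_Int)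
  \<comment> \<open>Tags in \<open>N\<close> carry little length and hence little increment; elsewhere the derivative bound applies.\<close>
  define \<D>N where "\<D>N = {p \<in> \<D>. fst p \<in> N}"
  let ?inc = "\<lambda>(x, K). g (Sup K) - g (Inf K)" and ?len = "\<lambda>(x::real, K). Sup K - Inf K"
  have split: "sum h \<D> = sum h \<D>N + sum h (\<D> - \<D>N)" for h :: "real \<times> real set \<Rightarrow> real"
    using sum.subset_diff[of \<D>N \<D> h] \<D>(1) by (auto simp: \<D>N_def)
  have len_N: "sum ?len \<D>N < \<delta>" using \<gamma>1[OF \<D>(1) fine(1)] by (simp add: \<D>N_def)
  then have inc_N: "sum ?inc \<D>N < e" using small_increment[OF \<D>(1), of \<D>N] \<delta> by (auto simp: \<D>N_def)
  have "?inc p \<le> (c + e) * ?len p" if "p \<in> \<D> - \<D>N" for p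
  proof -
    obtain x K where p: "p = (x, K)" by fastforce
    then have "(x, K) \<in> \<D>" "x \<notin> N" using that by (auto simp: \<D>N_def)
    moreover have "x \<in> {a..b}" using tagged_division_of_real_interval(3,4)[OF \<D>(1) \<open>(x, K) \<in> \<D>\<close>] by blast
    ultimately show ?thesis using \<gamma>2[OF \<D>(1) fine(2)] p by simp
  qed
  then have "sum ?inc (\<D> - \<D>N) \<le> sum (\<lambda>p. (c + e) * ?len p) (\<D> - \<D>N)" by (rule sum_mono)
  then have inc_rest: "sum ?inc (\<D> - \<D>N) \<le> (c + e) * sum ?len (\<D> - \<D>N)"
    by (simp add: sum_distrib_left split_beta)
  have "0 \<le> sum ?len \<D>N"
    using tagged_division_of_real_interval(2)[OF \<D>(1)] by (intro sum_nonneg) (auto simp: \<D>N_def)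
  then have "- ((c + e) * sum ?len \<D>N) \<le> \<bar>c + e\<bar> * sum ?len \<D>N"
    by (metis abs_ge_minus_self abs_mult abs_of_nonneg mult_minus_left)
  also have "\<dots> \<le> \<bar>c + e\<bar> * \<delta>" using len_N by (intro mult_left_mono) auto
  finally have "- ((c + e) * sum ?len \<D>N) \<le> \<bar>c + e\<bar> * \<delta>" .
  moreover have "g b - g a = sum ?inc \<D>" using additive_tagged_division_1[OF ab \<D>(1), of g] by simp
  ultimately show "g b - g a \<le> c * (b - a) + e0"
    using split[of ?inc] split[of ?len] tagged_division_total_length[OF \<D>(1) ab] inc_N inc_rest c\<delta> e(2)
    by (simp add: algebra_simps)
qed

lemma abs_continuous_on_mean_value:
  fixes f :: "real \<Rightarrow> 'a::euclidean_space"
  assumes ab: "a < b" and ac: "abs_continuous_on {a..b} f"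
    and N: "negligible N" and S: "closed S" "convex S"
    and der: "\<And>t. t \<in> {a..b} \<Longrightarrow> t \<notin> N \<Longrightarrow> \<exists>v. (f has_vector_derivative v) (at t) \<and> v \<in> S"
  shows "(f b - f a) /\<^sub>R (b - a) \<in> S"
proof (rule ccontr)
  assume "(f b - f a) /\<^sub>R (b - a) \<notin> S"
  then obtain w c where wc: "inner w ((f b - f a) /\<^sub>R (b - a)) < c" "\<And>x. x \<in> S \<Longrightarrow> inner w x > c"
    using separating_hyperplane_closed_point[OF S(2) S(1)] by blast
  define g where "g t = inner (- w) (f t)" for t
  have "g b - g a \<le> (- c) * (b - a)"
  proof (rule abs_continuous_on_increment_le[OF _ _ N])
    show "a \<le> b" using ab by simp
    show "abs_continuous_on {a..b} g" unfolding g_def by (rule abs_continuous_on_inner[OF ac])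
    fix t assume t: "t \<in> {a..b}" "t \<notin> N"
    obtain v where v: "(f has_vector_derivative v) (at t)" "v \<in> S" using der[OF t] by blast
    have "(g has_vector_derivative inner (- w) v) (at t)"
      unfolding g_def by (rule bounded_linear.has_vector_derivative[OF bounded_linear_inner_right v(1)])
    moreover have "inner (- w) v \<le> - c" using wc(2)[OF v(2)] by simp
    ultimately show "\<exists>d. (g has_real_derivative d) (at t) \<and> d \<le> - c"
      by (auto simp: has_real_derivative_iff_has_vector_derivative)
  qed
  then have "inner w (f b - f a) \<ge> c * (b - a)"
    by (simp add: g_def inner_diff_right algebra_simps)
  then have "inner w ((f b - f a) /\<^sub>R (b - a)) \<ge> c"
    using ab by (simp add: divide_simps mult.commute)
  then show False using wc(1) by simp
qed

lemma continuous_on_approach_from_left: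
  fixes f1 :: "real \<Rightarrow> 'a::metric_space" and f2 :: "real \<Rightarrow> 'b::metric_space"
  assumes "continuous_on {a1..b} f1" "continuous_on {a2..b} f2" "a1 < b" "a2 < b" "c < b" "e > 0"
  obtains s where "a1 < s" "a2 < s" "c < s" "s < b" "dist (f1 s) (f1 b) < e" "dist (f2 s) (f2 b) < e"
proof -
  obtain \<delta>1 where \<delta>1: "\<delta>1 > 0" "\<And>s. s \<in> {a1..b} \<Longrightarrow> dist s b < \<delta>1 \<Longrightarrow> dist (f1 s) (f1 b) < e"
    using assms(1,3,6) unfolding continuous_on_iff by (metis atLeastAtMost_iff less_imp_le order_refl)
  obtain \<delta>2 where \<delta>2: "\<delta>2 > 0" "\<And>s. s \<in> {a2..b} \<Longrightarrow> dist s b < \<delta>2 \<Longrightarrow> dist (f2 s) (f2 b) < e"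
    using assms(2,4,6) unfolding continuous_on_iff by (metis atLeastAtMost_iff less_imp_le order_refl)
  define m where "m = min (min \<delta>1 \<delta>2) (b - max (max a1 a2) c)"
  have m: "m > 0" "m \<le> \<delta>1" "m \<le> \<delta>2" "m \<le> b - max (max a1 a2) c"
    using assms(3-5) \<delta>1(1) \<delta>2(1) by (auto simp: m_def)
  show ?thesis
  proof (rule that[of "b - m / 2"])
    show "a1 < b - m / 2" "a2 < b - m / 2" "c < b - m / 2" "b - m / 2 < b" using m by auto
    then show "dist (f1 (b - m / 2)) (f1 b) < e" "dist (f2 (b - m / 2)) (f2 b) < e"
      using \<delta>1(2) \<delta>2(2) m by (auto simp: dist_real_def)
  qed
qed

section \<open>Hybrid time domains\<close>

lemma hybrid_time_domain_truncation:
  assumes "hybrid_time_domain E" "(T, J) \<in> E"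
  obtains s where "s 0 = 0" "\<forall>j\<le>J. s j \<le> s (Suc j)"
    "E \<inter> ({0..T} \<times> {0..J}) = (\<Union>j\<le>J. {s j..s (Suc j)} \<times> {j})"
proof -
  have "\<forall>(T, J)\<in>E. \<exists>s :: nat \<Rightarrow> real. s 0 = 0 \<and> (\<forall>j\<le>J. s j \<le> s (Suc j)) \<and>
        E \<inter> ({0..T} \<times> {0..J}) = (\<Union>j\<le>J. {s j..s (Suc j)} \<times> {j})"
    using assms(1) unfolding hybrid_time_domain_def by (rule conjunct2)
  from bspec[OF this assms(2)] show ?thesis using that by auto
qed

lemma truncation_memI:
  assumes "E \<inter> ({0..T} \<times> {0..J}) = (\<Union>j\<le>J. {s j..s (Suc j)} \<times> {j})"
    and "i \<le> J" "s i \<le> x" "x \<le> s (Suc i)"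
  shows "(x, i) \<in> E" "0 \<le> x" "x \<le> T"
proof -
  have "(x, i) \<in> (\<Union>j\<le>J. {s j..s (Suc j)} \<times> {j})" using assms(2-4) by (intro UN_I[of i]) auto
  then have "(x, i) \<in> E \<inter> ({0..T} \<times> {0..J})" by (simp only: assms(1))
  then show "(x, i) \<in> E" "0 \<le> x" "x \<le> T" by auto
qed

lemma truncation_memD:
  assumes "E \<inter> ({0..T} \<times> {0..J}) = (\<Union>j\<le>J. {s j..s (Suc j)} \<times> {j})"
    and "(x, i) \<in> E" "0 \<le> x" "x \<le> T" "i \<le> J"
  shows "s i \<le> x" "x \<le> s (Suc i)"
proof -
  have "(x, i) \<in> E \<inter> ({0..T} \<times> {0..J})" using assms(2-5) by (intro IntI SigmaI) auto
  then have "(x, i) \<in> (\<Union>j\<le>J. {s j..s (Suc j)} \<times> {j})" by (simp only: assms(1))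
  then obtain k where "k \<le> J" "(x, i) \<in> {s k..s (Suc k)} \<times> {k}" by blast
  then show "s i \<le> x" "x \<le> s (Suc i)" by (auto simp only: mem_Sigma_iff singleton_iff atLeastAtMost_iff)
qed

lemma hybrid_time_domain_nonneg:
  assumes "hybrid_time_domain E" "(t, j) \<in> E"
  shows "0 \<le> t"
proof -
  obtain s where s: "s 0 = 0" "\<forall>i\<le>j. s i \<le> s (Suc i)"
    "E \<inter> ({0..t} \<times> {0..j}) = (\<Union>i\<le>j. {s i..s (Suc i)} \<times> {i})"
    by (rule hybrid_time_domain_truncation[OF assms])
  have "s 0 \<le> s (Suc 0)" using s(2) by simp
  then show ?thesis using truncation_memI(3)[OF s(3) le0 order_refl] s(1) by simp
qed

lemma hybrid_time_domain_origin:
  assumes "hybrid_time_domain E"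
  shows "(0, 0) \<in> E"
proof -
  obtain T J where "(T, J) \<in> E" using assms unfolding hybrid_time_domain_def by auto
  then obtain s where s: "s 0 = 0" "\<forall>i\<le>J. s i \<le> s (Suc i)"
    "E \<inter> ({0..T} \<times> {0..J}) = (\<Union>i\<le>J. {s i..s (Suc i)} \<times> {i})"
    using hybrid_time_domain_truncation[OF assms] by blast
  have "s 0 \<le> s (Suc 0)" using s(2) by simp
  then show ?thesis using truncation_memI(1)[OF s(3) le0 order_refl] s(1) by simp
qed

lemma hybrid_time_domain_interval:
  assumes "hybrid_time_domain E" "(t1, j) \<in> E" "(t2, j) \<in> E" "t1 \<le> t" "t \<le> t2"
  shows "(t, j) \<in> E"
proof -
  obtain s where s: "s 0 = 0" "\<forall>i\<le>j. s i \<le> s (Suc i)"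
    "E \<inter> ({0..t2} \<times> {0..j}) = (\<Union>i\<le>j. {s i..s (Suc i)} \<times> {i})"
    by (rule hybrid_time_domain_truncation[OF assms(1,3)])
  have "s j \<le> t1" "t2 \<le> s (Suc j)"
    using truncation_memD[OF s(3) assms(2)] truncation_memD[OF s(3) assms(3)]
      hybrid_time_domain_nonneg[OF assms(1,2)] assms(4,5) by auto
  then show ?thesis using truncation_memI(1)[OF s(3), of j t] assms(4,5) by auto
qed

lemma hybrid_time_domain_jump_below:
  assumes "hybrid_time_domain E" "(t', j') \<in> E" "j < j'"
  obtains \<tau> where "\<tau> \<le> t'" "(\<tau>, j) \<in> E" "(\<tau>, Suc j) \<in> E"
proof -
  obtain s where s: "s 0 = 0" "\<forall>k\<le>j'. s k \<le> s (Suc k)"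
    "E \<inter> ({0..t'} \<times> {0..j'}) = (\<Union>k\<le>j'. {s k..s (Suc k)} \<times> {k})"
    by (rule hybrid_time_domain_truncation[OF assms(1,2)])
  have "(s (Suc j), j) \<in> E" using truncation_memI(1)[OF s(3), of j "s (Suc j)"] s(2) assms(3) by auto
  moreover have "(s (Suc j), Suc j) \<in> E" "s (Suc j) \<le> t'"
    using truncation_memI[OF s(3), of "Suc j" "s (Suc j)"] s(2) assms(3) by auto
  ultimately show ?thesis using that by blast
qed

lemma hybrid_time_domain_entry:
  assumes "hybrid_time_domain E" "(t, j) \<in> E"
  obtains a where "a \<le> t" "(a, j) \<in> E" "j = 0 \<Longrightarrow> a = 0"
    "\<And>k. j = Suc k \<Longrightarrow> (a, k) \<in> E \<and> (a, Suc k) \<in> E"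
proof (cases j)
  case 0
  then show ?thesis
    using that[of 0] hybrid_time_domain_nonneg[OF assms] hybrid_time_domain_origin[OF assms(1)] by simp
next
  case (Suc k)
  then obtain \<tau> where "\<tau> \<le> t" "(\<tau>, k) \<in> E" "(\<tau>, Suc k) \<in> E"
    using hybrid_time_domain_jump_below[OF assms(1), of t j k] assms(2) by blast
  then show ?thesis using that[of \<tau>] Suc by simp
qed

text \<open>Hybrid time domains as defined only constrain their truncations, so they may contain a later
  jump index at an earlier time. Solutions of the systems considered below cannot, since no flow
  starts in \<open>D\<close>; this ordering is then needed explicitly.\<close>

definition ordered_time_domain :: "(real \<times> nat) set \<Rightarrow> bool" where
  "ordered_time_domain E \<longleftrightarrow> (\<forall>t j t' j'. (t, j) \<in> E \<longrightarrow> (t', j') \<in> E \<longrightarrow> j < j' \<longrightarrow> t \<le> t')"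

lemma hybrid_time_domain_flow_or_jump:
  assumes E: "hybrid_time_domain E" "ordered_time_domain E" "t_complete E"
    and tj: "(t, j) \<in> E" and \<sigma>: "\<sigma> > 0"
  shows "(t + \<sigma>, j) \<in> E \<or> (\<exists>\<tau>. t \<le> \<tau> \<and> \<tau> < t + \<sigma> \<and> (\<tau>, j) \<in> E \<and> (\<tau>, Suc j) \<in> E)"
proof -
  obtain T J where TJ: "(T, J) \<in> E" "T \<ge> t + \<sigma>" using E(3) unfolding t_complete_def by fast
  consider "J < j" | "J = j" | "j < J" by linarith
  then show ?thesis
  proof cases
    case 1
    then have "T \<le> t" using E(2) tj TJ(1) unfolding ordered_time_domain_def by blast
    then show ?thesis using TJ(2) \<sigma> by simp
  next
    case 2
    then show ?thesis using hybrid_time_domain_interval[OF E(1) tj, of T "t + \<sigma>"] TJ \<sigma> by simp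
  next
    case 3
    obtain s where s: "s 0 = 0" "\<forall>k\<le>J. s k \<le> s (Suc k)"
      "E \<inter> ({0..T} \<times> {0..J}) = (\<Union>k\<le>J. {s k..s (Suc k)} \<times> {k})"
      by (rule hybrid_time_domain_truncation[OF E(1) TJ(1)])
    have "t \<le> s (Suc j)"
      using truncation_memD[OF s(3) tj hybrid_time_domain_nonneg[OF E(1) tj]] TJ(2) \<sigma> 3 by simp
    moreover have "(s (Suc j), j) \<in> E" "(s (Suc j), Suc j) \<in> E"
      using truncation_memI(1)[OF s(3), of j "s (Suc j)"] truncation_memI(1)[OF s(3), of "Suc j" "s (Suc j)"]
        s(2) 3 by auto
    moreover have "(t + \<sigma>, j) \<in> E" if "s (Suc j) \<ge> t + \<sigma>"
      using hybrid_time_domain_interval[OF E(1) tj \<open>(s (Suc j), j) \<in> E\<close>, of "t + \<sigma>"] \<sigma> that by simp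
    ultimately show ?thesis by (meson not_le)
  qed
qed

section \<open>Mean-value arcs\<close>

text \<open>A piece of flow of duration \<open>h\<close> is only used through the mean value property of its
  difference quotients. Flow pieces of solutions are such arcs for \<open>F\<close>, and flow pieces run
  backwards in time are such arcs for \<open>-F\<close>.\<close>

definition mean_value_arc :: "'a::euclidean_space set \<Rightarrow> ('a \<Rightarrow> 'a set) \<Rightarrow> (real \<Rightarrow> 'a) \<Rightarrow> real \<Rightarrow> bool" where
  "mean_value_arc C F \<gamma> h \<longleftrightarrow> h > 0 \<and> continuous_on {0..h} \<gamma> \<and> (\<forall>u. 0 < u \<and> u < h \<longrightarrow> \<gamma> u \<in> C) \<and>
     (\<forall>a b S. 0 \<le> a \<and> a < b \<and> b \<le> h \<and> closed S \<and> convex S \<and> (\<forall>u. a < u \<and> u < b \<longrightarrow> F (\<gamma> u) \<subseteq> S)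
        \<longrightarrow> (\<gamma> b - \<gamma> a) /\<^sub>R (b - a) \<in> S)"

lemma mean_value_arcD:
  assumes "mean_value_arc C F \<gamma> h"
  shows "h > 0" "continuous_on {0..h} \<gamma>" "\<And>u. 0 < u \<Longrightarrow> u < h \<Longrightarrow> \<gamma> u \<in> C"
    "\<And>a b S. 0 \<le> a \<Longrightarrow> a < b \<Longrightarrow> b \<le> h \<Longrightarrow> closed S \<Longrightarrow> convex S \<Longrightarrow>
       (\<And>u. a < u \<Longrightarrow> u < b \<Longrightarrow> F (\<gamma> u) \<subseteq> S) \<Longrightarrow> (\<gamma> b - \<gamma> a) /\<^sub>R (b - a) \<in> S"
  using assms unfolding mean_value_arc_def by blast+

lemma mean_value_arc_restrict:
  assumes "mean_value_arc C F \<gamma> h" "0 < h'" "h' \<le> h"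
  shows "mean_value_arc C F \<gamma> h'"
proof -
  have "continuous_on {0..h'} \<gamma>"
    using continuous_on_subset[OF mean_value_arcD(2)[OF assms(1)]] assms by auto
  then show ?thesis using assms mean_value_arcD[OF assms(1)] unfolding mean_value_arc_def by auto
qed

lemma mean_value_arc_start_in:
  assumes "mean_value_arc C F \<gamma> h" "closed C"
  shows "\<gamma> 0 \<in> C"
proof -
  have h: "h > 0" using mean_value_arcD(1)[OF assms(1)] .
  have "\<gamma> ` closure {0<..<h} \<subseteq> C"
    using mean_value_arcD(2,3)[OF assms(1)] h assms(2) by (intro image_closure_subset) auto
  then show ?thesis using h by auto
qed

lemma mean_value_arc_end_in:
  assumes "mean_value_arc C F \<gamma> h" "closed C"
  shows "\<gamma> h \<in> C"
proof -
  have h: "h > 0" using mean_value_arcD(1)[OF assms(1)] .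
  have "\<gamma> ` closure {0<..<h} \<subseteq> C"
    using mean_value_arcD(2,3)[OF assms(1)] h assms(2) by (intro image_closure_subset) auto
  then show ?thesis using h by auto
qed

lemma mean_value_arc_increment_le:
  assumes "mean_value_arc C F \<gamma> h" "0 \<le> a" "a < b" "b \<le> h"
    "\<And>u f. a < u \<Longrightarrow> u < b \<Longrightarrow> f \<in> F (\<gamma> u) \<Longrightarrow> norm f \<le> M"
  shows "norm (\<gamma> b - \<gamma> a) \<le> M * (b - a)"
proof -
  have "(\<gamma> b - \<gamma> a) /\<^sub>R (b - a) \<in> cball 0 M"
    by (rule mean_value_arcD(4)[OF assms(1-4)]) (use assms(5) in auto)
  then have "inverse (b - a) * norm (\<gamma> b - \<gamma> a) \<le> M" using assms(3) by simp
  then show ?thesis using assms(3) by (simp add: field_simps)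
qed

context
  fixes C :: "'a::euclidean_space set" and F :: "'a \<Rightarrow> 'a set" and \<gamma> :: "real \<Rightarrow> 'a"
    and h \<rho> M :: real and c :: 'a
  assumes arc: "mean_value_arc C F \<gamma> h"
    and bound: "\<And>z f. z \<in> C \<Longrightarrow> z \<in> ball c \<rho> \<Longrightarrow> f \<in> F z \<Longrightarrow> norm f \<le> M"
    and start: "dist (\<gamma> 0) c < \<rho> / 2" and short: "M * h < \<rho> / 2" and M: "M \<ge> 0"
begin

lemma mean_value_arc_stays_in_ball:
  assumes u: "0 \<le> u" "u \<le> h"
  shows "\<gamma> u \<in> ball c \<rho>"
proof (rule ccontr)
  assume "\<gamma> u \<notin> ball c \<rho>"
  define A where "A = {v \<in> {0..h}. \<rho> \<le> dist c (\<gamma> v)}"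
  have "closed A" unfolding A_def
    by (intro continuous_on_closed_Collect_le continuous_intros mean_value_arcD(2)[OF arc]
        closed_atLeastAtMost)
  moreover have uA: "u \<in> A" using u \<open>\<gamma> u \<notin> ball c \<rho>\<close> by (auto simp: A_def)
  moreover have bdd: "bdd_below A" unfolding A_def by (rule bdd_belowI[of _ 0]) auto
  ultimately have u1A: "Inf A \<in> A" using closed_contains_Inf by blast
  define u1 where "u1 = Inf A"
  \<comment> \<open>Before the first exit time \<open>u1\<close> the speed bound applies, so the arc is still inside at \<open>u1\<close>.\<close>
  have u1: "u1 \<le> u" "\<And>v. v \<in> A \<Longrightarrow> u1 \<le> v" unfolding u1_def using cInf_lower[OF _ bdd] uA by auto
  have "u1 \<noteq> 0"
  proof
    assume "u1 = 0"
    then have "\<rho> \<le> dist c (\<gamma> 0)" using u1A by (simp add: A_def u1_def)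
    then show False using start zero_le_dist[of c "\<gamma> 0"] by (simp add: dist_commute)
  qed
  then have u1_pos: "u1 > 0" using u1A by (auto simp: A_def u1_def)
  have "norm (\<gamma> u1 - \<gamma> 0) \<le> M * (u1 - 0)"
  proof (rule mean_value_arc_increment_le[OF arc order_refl u1_pos])
    show "u1 \<le> h" using u1 u by simp
    fix v f assume v: "0 < v" "v < u1" "f \<in> F (\<gamma> v)"
    have "v \<notin> A" using u1(2) v by force
    then have "\<gamma> v \<in> ball c \<rho>" using v u1 u by (auto simp: A_def dist_commute)
    moreover have "\<gamma> v \<in> C" using mean_value_arcD(3)[OF arc] v u1 u by simp
    ultimately show "norm f \<le> M" using bound v(3) by blast
  qed
  also have "\<dots> \<le> M * h" using u1 u M by (intro mult_left_mono) auto
  finally have "dist c (\<gamma> u1) < \<rho>"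
    using start short by (metis dist_commute dist_norm dist_triangle_half_r order.strict_trans1)
  then show False using u1A by (simp add: A_def u1_def)
qed

lemma mean_value_arc_speed:
  assumes u: "0 \<le> u" "u \<le> h"
  shows "norm (\<gamma> u - \<gamma> 0) \<le> M * u"
proof (cases "u = 0")
  case False
  then have "0 < u" using u by simp
  have "norm (\<gamma> u - \<gamma> 0) \<le> M * (u - 0)"
  proof (rule mean_value_arc_increment_le[OF arc order_refl \<open>0 < u\<close> u(2)])
    fix v f assume v: "0 < v" "v < u" "f \<in> F (\<gamma> v)"
    have "\<gamma> v \<in> C" using mean_value_arcD(3)[OF arc, of v] v u by simp
    moreover have "\<gamma> v \<in> ball c \<rho>" using mean_value_arc_stays_in_ball[of v] v u by simp
    ultimately show "norm f \<le> M" using bound v(3) by blast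
  qed
  then show ?thesis by simp
qed simp

end

context
  fixes C D :: "'a::euclidean_space set" and F G :: "'a \<Rightarrow> 'a set"
    and E :: "(real \<times> nat) set" and \<phi> :: "real \<times> nat \<Rightarrow> 'a"
  assumes sol: "is_solution C F D G E \<phi>"
begin

lemma solution_domain: "hybrid_time_domain E"
  using sol unfolding is_solution_def by blast

lemma solution_initial: "\<phi> (0, 0) \<in> C \<union> D"
  using sol unfolding is_solution_def by blast

lemma solution_jump:
  assumes "(t, j) \<in> E" "(t, Suc j) \<in> E"
  shows "\<phi> (t, j) \<in> D" "\<phi> (t, Suc j) \<in> G (\<phi> (t, j))"
  using sol assms unfolding is_solution_def by blast+

lemma solution_slice_interval:
  assumes "(a, j) \<in> E" "(b, j) \<in> E"
  shows "{a..b} \<subseteq> time_slice E j"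
  using hybrid_time_domain_interval[OF solution_domain assms] unfolding time_slice_def by auto

lemma solution_slice_interior:
  assumes "(a, j) \<in> E" "(b, j) \<in> E"
  shows "{a<..<b} \<subseteq> interior (time_slice E j)"
  using solution_slice_interval[OF assms] by (intro interior_maximal) auto

lemma solution_abs_continuous:
  assumes "(a, j) \<in> E" "(b, j) \<in> E"
  shows "abs_continuous_on {a..b} (\<lambda>t. \<phi> (t, j))"
  using sol solution_slice_interval[OF assms]
  unfolding is_solution_def locally_abs_continuous_on_def by blast

lemma solution_continuous_on:
  assumes "(a, j) \<in> E" "(b, j) \<in> E"
  shows "continuous_on {a..b} (\<lambda>t. \<phi> (t, j))"
  by (rule abs_continuous_on_imp_continuous_on[OF solution_abs_continuous[OF assms]])

lemma solution_flows_in_C: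
  assumes "(a, j) \<in> E" "(b, j) \<in> E" "a < t" "t < b"
  shows "\<phi> (t, j) \<in> C"
proof -
  have "t \<in> interior (time_slice E j)" using solution_slice_interior[OF assms(1,2)] assms(3,4) by auto
  then show ?thesis using sol unfolding is_solution_def by blast
qed

lemma solution_flows_in_closed_C:
  assumes "(a, j) \<in> E" "(b, j) \<in> E" "a < b" "a \<le> t" "t \<le> b" "closed C"
  shows "\<phi> (t, j) \<in> C"
proof -
  have "(\<lambda>t. \<phi> (t, j)) ` closure {a<..<b} \<subseteq> C"
    using solution_continuous_on[OF assms(1,2)] solution_flows_in_C[OF assms(1,2)] assms(3,6)
    by (intro image_closure_subset) auto
  then show ?thesis using assms(3-5) by auto
qed

lemma solution_mean_value:
  assumes "(a, j) \<in> E" "(b, j) \<in> E" "a < b" "closed S" "convex S"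
    and F_sub: "\<And>u. a < u \<Longrightarrow> u < b \<Longrightarrow> F (\<phi> (u, j)) \<subseteq> S"
  shows "(\<phi> (b, j) - \<phi> (a, j)) /\<^sub>R (b - a) \<in> S"
proof -
  have sub: "{a..b} \<subseteq> time_slice E j" by (rule solution_slice_interval[OF assms(1,2)])
  have "interior (time_slice E j) \<noteq> {}" using solution_slice_interior[OF assms(1,2)] assms(3) by auto
  then have "AE t in lebesgue. t \<in> time_slice E j \<longrightarrow>
           (\<exists>v. ((\<lambda>s. \<phi> (s, j)) has_vector_derivative v) (at t) \<and> v \<in> F (\<phi> (t, j)))"
    using sol unfolding is_solution_def by blast
  then obtain N0 where N0: "\<And>t. t \<in> space lebesgue - N0 \<Longrightarrow> t \<in> time_slice E j \<longrightarrow>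
           (\<exists>v. ((\<lambda>s. \<phi> (s, j)) has_vector_derivative v) (at t) \<and> v \<in> F (\<phi> (t, j)))"
    "N0 \<in> null_sets lebesgue"
    by (rule AE_E3) blast
  have N: "negligible (N0 \<union> {a, b})"
    using N0(2) by (simp add: negligible_iff_null_sets[symmetric] negligible_insert)
  show ?thesis
  proof (rule abs_continuous_on_mean_value[OF assms(3) solution_abs_continuous[OF assms(1,2)] N assms(4,5)])
    fix t assume t: "t \<in> {a..b}" "t \<notin> N0 \<union> {a, b}"
    then obtain v where "((\<lambda>s. \<phi> (s, j)) has_vector_derivative v) (at t)" "v \<in> F (\<phi> (t, j))"
      using N0(1)[of t] sub by auto
    then show "\<exists>v. ((\<lambda>s. \<phi> (s, j)) has_vector_derivative v) (at t) \<and> v \<in> S"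
      using F_sub[of t] t by auto
  qed
qed

lemma solution_mean_value_arc:
  assumes "(s, j) \<in> E" "(s + h, j) \<in> E" "h > 0"
  shows "mean_value_arc C F (\<lambda>u. \<phi> (s + u, j)) h"
  unfolding mean_value_arc_def
proof (intro conjI allI impI)
  show "h > 0" by fact
  show "continuous_on {0..h} (\<lambda>u. \<phi> (s + u, j))"
    by (rule continuous_on_compose2[OF solution_continuous_on[OF assms(1,2)], of _ "\<lambda>u. s + u"])
      (auto intro!: continuous_intros)
  fix u assume "0 < u \<and> u < h"
  then show "\<phi> (s + u, j) \<in> C" using solution_flows_in_C[OF assms(1,2), of "s + u"] by simp
next
  fix a b S assume A: "0 \<le> a \<and> a < b \<and> b \<le> h \<and> closed S \<and> convex S \<and>
      (\<forall>u. a < u \<and> u < b \<longrightarrow> F (\<phi> (s + u, j)) \<subseteq> S)"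
  have "(s + a, j) \<in> E" "(s + b, j) \<in> E"
    using hybrid_time_domain_interval[OF solution_domain assms(1,2)] A by auto
  then have "(\<phi> (s + b, j) - \<phi> (s + a, j)) /\<^sub>R ((s + b) - (s + a)) \<in> S"
  proof (rule solution_mean_value)
    fix u assume "s + a < u" "u < s + b"
    then show "F (\<phi> (u, j)) \<subseteq> S" using A by (metis add.commute add_less_cancel_right diff_add_cancel)
  qed (use A in auto)
  then show "(\<phi> (s + b, j) - \<phi> (s + a, j)) /\<^sub>R (b - a) \<in> S" by simp
qed

lemma solution_reversed_mean_value_arc:
  assumes "(s - h, j) \<in> E" "(s, j) \<in> E" "h > 0"
  shows "mean_value_arc C (\<lambda>x. uminus ` F x) (\<lambda>u. \<phi> (s - u, j)) h"
  unfolding mean_value_arc_def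
proof (intro conjI allI impI)
  show "h > 0" by fact
  show "continuous_on {0..h} (\<lambda>u. \<phi> (s - u, j))"
    by (rule continuous_on_compose2[OF solution_continuous_on[OF assms(1,2)], of _ "\<lambda>u. s - u"])
      (auto intro!: continuous_intros)
  fix u assume "0 < u \<and> u < h"
  then show "\<phi> (s - u, j) \<in> C" using solution_flows_in_C[OF assms(1,2), of "s - u"] by simp
next
  fix a b S assume A: "0 \<le> a \<and> a < b \<and> b \<le> h \<and> closed S \<and> convex S \<and>
      (\<forall>u. a < u \<and> u < b \<longrightarrow> uminus ` F (\<phi> (s - u, j)) \<subseteq> S)"
  have "(s - b, j) \<in> E" "(s - a, j) \<in> E"
    using hybrid_time_domain_interval[OF solution_domain assms(1,2)] A by auto
  then have "(\<phi> (s - a, j) - \<phi> (s - b, j)) /\<^sub>R ((s - a) - (s - b)) \<in> uminus ` S"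
  proof (rule solution_mean_value)
    show "closed (uminus ` S)" "convex (uminus ` S)" using A by (simp_all add: closed_negations convex_negations)
    fix u assume "s - b < u" "u < s - a"
    then have "a < s - u" "s - u < b" by simp_all
    then have "uminus ` F (\<phi> (s - (s - u), j)) \<subseteq> S" using A by blast
    then have sub: "uminus ` F (\<phi> (u, j)) \<subseteq> S" by simp
    show "F (\<phi> (u, j)) \<subseteq> uminus ` S"
    proof
      fix f assume "f \<in> F (\<phi> (u, j))"
      then have "- f \<in> S" using sub by blast
      then show "f \<in> uminus ` S" by (metis image_eqI minus_minus)
    qed
  qed (use A in auto)
  then obtain f where "f \<in> S" "(\<phi> (s - a, j) - \<phi> (s - b, j)) /\<^sub>R (b - a) = - f"
    by auto
  then have "- ((\<phi> (s - a, j) - \<phi> (s - b, j)) /\<^sub>R (b - a)) \<in> S" by simp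
  then show "(\<phi> (s - b, j) - \<phi> (s - a, j)) /\<^sub>R (b - a) \<in> S"
    by (simp add: scaleR_diff_right)
qed

end

lemma LIMSEQ_norm_le_div_Suc:
  fixes f :: "nat \<Rightarrow> 'b::real_normed_vector"
  assumes "\<And>n. norm (f n) \<le> c / (real n + 1)"
  shows "f \<longlonglongrightarrow> 0"
proof (rule Lim_null_comparison)
  show "\<forall>\<^sub>F n in sequentially. norm (f n) \<le> c * inverse (real (Suc n))"
    using assms by (simp add: divide_inverse add.commute)
  show "(\<lambda>n. c * inverse (real (Suc n))) \<longlonglongrightarrow> 0"
    using tendsto_mult[OF tendsto_const LIMSEQ_inverse_real_of_nat, of c] by simp
qed

lemma locally_bounded_relE:
  assumes "locally_bounded_rel F C" "x0 \<in> C"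
  obtains \<rho> M where "\<rho> > 0" "M > 0"
    "\<And>z f. z \<in> C \<Longrightarrow> z \<in> ball x0 \<rho> \<Longrightarrow> f \<in> F z \<Longrightarrow> norm f \<le> M"
proof -
  obtain U where U: "open U" "x0 \<in> U" "bounded (\<Union>z\<in>U \<inter> C. F z)"
    using assms unfolding locally_bounded_rel_def by blast
  obtain \<rho> where \<rho>: "\<rho> > 0" "ball x0 \<rho> \<subseteq> U" using U(1,2) open_contains_ball by blast
  obtain M where M: "\<And>f. f \<in> (\<Union>z\<in>U \<inter> C. F z) \<Longrightarrow> norm f \<le> M"
    using U(3) unfolding bounded_iff by blast
  show ?thesis
  proof (rule that[OF \<rho>(1), of "max M 1"])
    fix z f assume "z \<in> C" "z \<in> ball x0 \<rho>" "f \<in> F z"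
    then show "norm f \<le> max M 1" using M \<rho>(2) by fastforce
  qed simp
qed

lemma locally_bounded_rel_uminus:
  fixes F :: "'a::euclidean_space \<Rightarrow> 'a set"
  assumes "locally_bounded_rel F C"
  shows "locally_bounded_rel (\<lambda>x. uminus ` F x) C"
  unfolding locally_bounded_rel_def
proof
  fix x assume "x \<in> C"
  then obtain U where U: "open U" "x \<in> U" "bounded (\<Union>z\<in>U \<inter> C. F z)"
    using assms unfolding locally_bounded_rel_def by blast
  have "(\<Union>z\<in>U \<inter> C. uminus ` F z) = uminus ` (\<Union>z\<in>U \<inter> C. F z)" by auto
  then have "bounded (\<Union>z\<in>U \<inter> C. uminus ` F z)" using U(3) by simp
  then show "\<exists>U. open U \<and> x \<in> U \<and> bounded (\<Union>z\<in>U \<inter> C. uminus ` F z)" using U by blast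
qed

lemma osc_relD:
  assumes "osc_rel F C" "x \<in> C" "\<And>i. xs i \<in> C" "\<And>i. ys i \<in> F (xs i)" "xs \<longlonglongrightarrow> x" "ys \<longlonglongrightarrow> y"
  shows "y \<in> F x"
proof -
  have "\<forall>x\<in>C. \<forall>xs ys y. (\<forall>i. xs i \<in> C \<and> ys i \<in> F (xs i)) \<and> xs \<longlonglongrightarrow> x \<and> ys \<longlonglongrightarrow> y
      \<longrightarrow> y \<in> F x"
    using assms(1) unfolding osc_rel_def .
  from this[rule_format, OF assms(2)] show ?thesis using assms(3-6) by blast
qed

lemma osc_rel_uminus:
  fixes F :: "'a::euclidean_space \<Rightarrow> 'a set"
  assumes "osc_rel F C"
  shows "osc_rel (\<lambda>x. uminus ` F x) C"
  unfolding osc_rel_def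
proof (intro ballI allI impI)
  fix x xs ys y
  assume x: "x \<in> C" and seq: "(\<forall>i. xs i \<in> C \<and> ys i \<in> uminus ` F (xs i)) \<and> xs \<longlonglongrightarrow> x \<and> ys \<longlonglongrightarrow> y"
  have neg: "- ys i \<in> F (xs i)" for i
  proof -
    obtain f where "f \<in> F (xs i)" "ys i = - f" using seq by blast
    then show ?thesis by simp
  qed
  have "(\<lambda>i. - ys i) \<longlonglongrightarrow> - y" using seq by (intro tendsto_minus) blast
  then have "- y \<in> F x" using osc_relD[OF assms x, of xs "\<lambda>i. - ys i"] neg seq by blast
  then show "y \<in> uminus ` F x" by (metis image_eqI minus_minus)
qed

lemma osc_rel_closed_values:
  fixes F :: "'a::euclidean_space \<Rightarrow> 'b::euclidean_space set"
  assumes "osc_rel F C" "x \<in> C"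
  shows "closed (F x)"
  unfolding closed_sequential_limits
proof (intro allI impI)
  fix ys y assume "(\<forall>n. ys n \<in> F x) \<and> ys \<longlonglongrightarrow> y"
  then show "y \<in> F x"
    using assms unfolding osc_rel_def by (metis (no_types, lifting) tendsto_const)
qed

lemma osc_rel_halfspace_near:
  fixes F :: "'a::euclidean_space \<Rightarrow> 'a set"
  assumes osc: "osc_rel F C" and lb: "locally_bounded_rel F C" and x0: "x0 \<in> C"
    and open_halfspace: "\<And>f. f \<in> F x0 \<Longrightarrow> c < inner a f"
  obtains \<rho> where "\<rho> > 0" "\<And>z f. z \<in> C \<Longrightarrow> z \<in> ball x0 \<rho> \<Longrightarrow> f \<in> F z \<Longrightarrow> c \<le> inner a f"
proof -
  obtain \<rho>0 M where \<rho>0: "\<rho>0 > 0" "M > 0"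
    and M: "\<And>z f. z \<in> C \<Longrightarrow> z \<in> ball x0 \<rho>0 \<Longrightarrow> f \<in> F z \<Longrightarrow> norm f \<le> M"
    using locally_bounded_relE[OF lb x0] by blast
  have "\<exists>\<rho>>0. \<forall>z f. z \<in> C \<longrightarrow> z \<in> ball x0 \<rho> \<longrightarrow> f \<in> F z \<longrightarrow> c \<le> inner a f"
  proof (rule ccontr)
    assume "\<not> ?thesis"
    then have "\<forall>n::nat. \<exists>z f. z \<in> C \<and> z \<in> ball x0 (\<rho>0 / (real n + 1)) \<and> f \<in> F z \<and> inner a f < c"
      using \<rho>0(1) by (metis divide_pos_pos not_le of_nat_0_le_iff add_nonneg_pos zero_less_one)
    then obtain z f where zf: "\<And>n. z n \<in> C" "\<And>n. z n \<in> ball x0 (\<rho>0 / (real n + 1))"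
      "\<And>n. f n \<in> F (z n)" "\<And>n. inner a (f n) < c" by metis
    have "z n \<in> ball x0 \<rho>0" for n
    proof -
      have "\<rho>0 / (real n + 1) \<le> \<rho>0" using \<rho>0(1) by (simp add: divide_le_eq)
      then show ?thesis using zf(2)[of n] by auto
    qed
    then have "f n \<in> cball 0 M" for n using M[OF zf(1) _ zf(3)] by simp
    then obtain l r where lr: "strict_mono (r :: nat \<Rightarrow> nat)" "(f \<circ> r) \<longlonglongrightarrow> l"
      using seq_compactE[OF compact_imp_seq_compact[OF compact_cball[of 0 M]], of f] by blast
    have "(\<lambda>n. z n - x0) \<longlonglongrightarrow> 0"
    proof (rule LIMSEQ_norm_le_div_Suc)
      show "norm (z n - x0) \<le> \<rho>0 / (real n + 1)" for n
        using zf(2)[of n] by (simp add: dist_norm norm_minus_commute)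
    qed
    then have "z \<longlonglongrightarrow> x0" by (simp add: LIM_zero_iff)
    then have "(z \<circ> r) \<longlonglongrightarrow> x0" by (rule LIMSEQ_subseq_LIMSEQ[OF _ lr(1)])
    then have "l \<in> F x0"
      using osc_relD[OF osc x0, of "z \<circ> r" "f \<circ> r"] lr(2) zf(1,3) by simp
    moreover have "inner a l \<le> c"
    proof (rule LIMSEQ_le_const2)
      show "(\<lambda>n. inner a ((f \<circ> r) n)) \<longlonglongrightarrow> inner a l" by (intro tendsto_intros lr(2))
      show "\<exists>N. \<forall>n\<ge>N. inner a ((f \<circ> r) n) \<le> c" using zf(4) less_imp_le by auto
    qed
    ultimately show False using open_halfspace by fastforce
  qed
  then show ?thesis using that by blast
qed

lemma locally_bounded_rel_compactE:
  fixes F :: "'a::euclidean_space \<Rightarrow> 'a set"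
  assumes lb: "locally_bounded_rel F C" and W: "compact W" "W \<subseteq> C"
  obtains \<rho> M where "\<rho> > 0" "M > 0"
    "\<And>w z f. w \<in> W \<Longrightarrow> z \<in> C \<Longrightarrow> dist z w < \<rho> \<Longrightarrow> f \<in> F z \<Longrightarrow> norm f \<le> M"
proof -
  have "\<exists>\<rho>>0. \<exists>M>0. \<forall>w z f. w \<in> W \<longrightarrow> z \<in> C \<longrightarrow> dist z w < \<rho> \<longrightarrow> f \<in> F z \<longrightarrow> norm f \<le> M"
  proof (rule ccontr)
    assume unbounded: "\<not> ?thesis"
    have "\<forall>n::nat. \<exists>w z f. w \<in> W \<and> z \<in> C \<and> dist z w < 1 / (real n + 1) \<and> f \<in> F z \<and>
        real n < norm f"
    proof
      fix n :: nat
      have "1 / (real n + 1) > 0" "real n + 1 > 0" by simp_all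
      then have "\<not> (\<forall>w z f. w \<in> W \<longrightarrow> z \<in> C \<longrightarrow> dist z w < 1 / (real n + 1) \<longrightarrow> f \<in> F z \<longrightarrow>
          norm f \<le> real n + 1)"
        using unbounded by blast
      then obtain w z f where "w \<in> W" "z \<in> C" "dist z w < 1 / (real n + 1)" "f \<in> F z"
          "norm f > real n + 1"
        by (auto simp: not_le)
      then show "\<exists>w z f. w \<in> W \<and> z \<in> C \<and> dist z w < 1 / (real n + 1) \<and> f \<in> F z \<and> real n < norm f"
        by (intro exI[of _ w] exI[of _ z] exI[of _ f]) auto
    qed
    then obtain w z f where wzf: "\<And>n. w n \<in> W" "\<And>n. z n \<in> C" "\<And>n. dist (z n) (w n) < 1 / (real n + 1)"
      "\<And>n. f n \<in> F (z n)" "\<And>n. real n < norm (f n)" by metis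
    obtain w0 r where wr: "w0 \<in> W" "strict_mono (r :: nat \<Rightarrow> nat)" "(w \<circ> r) \<longlonglongrightarrow> w0"
      using seq_compactE[OF compact_imp_seq_compact[OF W(1)], of w] wzf(1) by metis
    obtain \<rho> M where \<rho>: "\<rho> > 0" "M > 0"
      and M: "\<And>z f. z \<in> C \<Longrightarrow> z \<in> ball w0 \<rho> \<Longrightarrow> f \<in> F z \<Longrightarrow> norm f \<le> M"
      using locally_bounded_relE[OF lb, of w0] wr(1) W(2) by blast
    have "(\<lambda>n. (z \<circ> r) n - (w \<circ> r) n) \<longlonglongrightarrow> 0"
    proof (rule LIMSEQ_norm_le_div_Suc)
      fix n
      have "norm ((z \<circ> r) n - (w \<circ> r) n) < 1 / (real (r n) + 1)"
        using wzf(3)[of "r n"] by (simp add: dist_norm)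
      also have "\<dots> \<le> 1 / (real n + 1)"
        using seq_suble[OF wr(2), of n] by (intro divide_left_mono) auto
      finally show "norm ((z \<circ> r) n - (w \<circ> r) n) \<le> 1 / (real n + 1)" by simp
    qed
    then have "(z \<circ> r) \<longlonglongrightarrow> w0" by (rule Lim_transform[OF wr(3)])
    then obtain N where N: "\<And>n. n \<ge> N \<Longrightarrow> dist ((z \<circ> r) n) w0 < \<rho>"
      using \<rho> unfolding LIMSEQ_def by blast
    obtain n where n: "n \<ge> N" "real n > M"
      using reals_Archimedean2[of M]
      by (metis le_less_trans max.cobounded1 max.cobounded2 of_nat_le_iff not_le real_arch_simple)
    have "norm (f (r n)) \<le> M" using M[OF wzf(2) _ wzf(4), of "r n"] N[OF n(1)] by (simp add: dist_commute)
    moreover have "real n \<le> real (r n)" using seq_suble[OF wr(2), of n] by simp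
    ultimately show False using wzf(5)[of "r n"] n(2) by linarith
  qed
  then show ?thesis using that by blast
qed

lemma osc_rel_single_valued_continuous_on:
  fixes G :: "'a::euclidean_space \<Rightarrow> 'a set"
  assumes osc: "osc_rel G D" and lb: "locally_bounded_rel G D" and Gg: "\<And>x. x \<in> D \<Longrightarrow> G x = {g x}"
  shows "continuous_on D g"
  unfolding continuous_on_iff
proof (intro ballI allI impI)
  fix a e assume a: "a \<in> D" and e: "(e::real) > 0"
  obtain \<rho> M where \<rho>: "\<rho> > 0" "M > 0" and M: "\<And>z f. z \<in> D \<Longrightarrow> z \<in> ball a \<rho> \<Longrightarrow> f \<in> G z \<Longrightarrow> norm f \<le> M"
    using locally_bounded_relE[OF lb a] by blast
  show "\<exists>d>0. \<forall>x'\<in>D. dist x' a < d \<longrightarrow> dist (g x') (g a) < e"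
  proof (rule ccontr)
    assume discontinuous: "\<not> ?thesis"
    have "\<forall>n::nat. \<exists>x'. x' \<in> D \<and> dist x' a < min \<rho> (1 / (real n + 1)) \<and> \<not> dist (g x') (g a) < e"
    proof
      fix n :: nat
      have "min \<rho> (1 / (real n + 1)) > 0" using \<rho> by simp
      then show "\<exists>x'. x' \<in> D \<and> dist x' a < min \<rho> (1 / (real n + 1)) \<and> \<not> dist (g x') (g a) < e"
        using discontinuous by blast
    qed
    then obtain xs where xs: "\<And>n. xs n \<in> D" "\<And>n. dist (xs n) a < min \<rho> (1 / (real n + 1))"
      "\<And>n. \<not> dist (g (xs n)) (g a) < e" by metis
    have "(\<lambda>n. xs n - a) \<longlonglongrightarrow> 0"
      using xs(2) by (intro LIMSEQ_norm_le_div_Suc[of _ 1]) (auto simp: dist_norm less_imp_le)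
    then have xlim: "xs \<longlonglongrightarrow> a" by (simp add: LIM_zero_iff)
    have "g (xs n) \<in> cball 0 M" for n
      using M[OF xs(1), of n "g (xs n)"] xs(2)[of n] Gg[OF xs(1)] by (simp add: dist_commute)
    then obtain y r where yr: "strict_mono (r :: nat \<Rightarrow> nat)" "((\<lambda>n. g (xs n)) \<circ> r) \<longlonglongrightarrow> y"
      using seq_compactE[OF compact_imp_seq_compact[OF compact_cball], of "\<lambda>n. g (xs n)"] by metis
    have "(xs \<circ> r) \<longlonglongrightarrow> a" using LIMSEQ_subseq_LIMSEQ[OF xlim yr(1)] .
    moreover have "\<forall>i. (xs \<circ> r) i \<in> D \<and> ((\<lambda>n. g (xs n)) \<circ> r) i \<in> G ((xs \<circ> r) i)"
      using xs(1) Gg by auto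
    ultimately have "y \<in> G a" using osc_relD[OF osc a] yr(2) by blast
    then have "y = g a" using Gg[OF a] by simp
    moreover have "e \<le> dist y (g a)"
    proof (rule LIMSEQ_le_const)
      show "(\<lambda>i. dist (((\<lambda>n. g (xs n)) \<circ> r) i) (g a)) \<longlonglongrightarrow> dist y (g a)"
        by (intro tendsto_intros yr(2))
      show "\<exists>N. \<forall>i\<ge>N. e \<le> dist (((\<lambda>n. g (xs n)) \<circ> r) i) (g a)" using xs(3) by (auto simp: not_less)
    qed
    ultimately show False using e by simp
  qed
qed

lemma proper_single_valued_closed_image:
  fixes G :: "'a::euclidean_space \<Rightarrow> 'a set"
  assumes osc: "osc_rel G D" and Gg: "\<And>x. x \<in> D \<Longrightarrow> G x = {g x}"
    and proper: "\<forall>K. compact K \<longrightarrow> compact {x\<in>D. G x \<inter> K \<noteq> {}}"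
  shows "closed (g ` D)"
  unfolding closed_sequential_limits
proof (intro allI impI)
  fix ys y assume ys: "(\<forall>n. ys n \<in> g ` D) \<and> ys \<longlonglongrightarrow> y"
  then have "\<forall>n. \<exists>x. x \<in> D \<and> ys n = g x" by blast
  then obtain xs where xs: "\<And>n. xs n \<in> D" "\<And>n. ys n = g (xs n)" by metis
  define K where "K = insert y (range ys)"
  have "compact K" unfolding K_def using compact_sequence_with_limit ys by blast
  then have P: "compact {x\<in>D. G x \<inter> K \<noteq> {}}" using proper by blast
  have "xs n \<in> {x\<in>D. G x \<inter> K \<noteq> {}}" for n using xs Gg by (auto simp: K_def)
  then obtain x r where xr: "x \<in> {x\<in>D. G x \<inter> K \<noteq> {}}" "strict_mono (r :: nat \<Rightarrow> nat)" "(xs \<circ> r) \<longlonglongrightarrow> x"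
    using seq_compactE[OF compact_imp_seq_compact[OF P], of xs] by metis
  have "(ys \<circ> r) \<longlonglongrightarrow> y" using LIMSEQ_subseq_LIMSEQ ys xr(2) by blast
  moreover have "\<forall>i. (xs \<circ> r) i \<in> D \<and> (ys \<circ> r) i \<in> G ((xs \<circ> r) i)" using xs Gg by auto
  ultimately have "y \<in> G x" using osc_relD[OF osc] xr by blast
  then show "y \<in> g ` D" using Gg xr(1) by auto
qed

section \<open>No flow along directions outside the tangent cone\<close>

lemma mean_value_arc_quotient_limit:
  fixes F :: "'a::euclidean_space \<Rightarrow> 'a set"
  assumes osc: "osc_rel F C" and lb: "locally_bounded_rel F C"
    and cvx: "\<And>x. x \<in> C \<Longrightarrow> convex (F x)" and x0: "x0 \<in> C"
    and arcs: "\<And>m. mean_value_arc C F (\<gamma> m) (h m)"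
    and near: "\<And>m u. 0 < u \<Longrightarrow> u < h m \<Longrightarrow> dist (\<gamma> m u) x0 \<le> e m" and e: "e \<longlonglongrightarrow> 0"
    and quotients: "(\<lambda>m. (\<gamma> m (h m) - \<gamma> m 0) /\<^sub>R h m) \<longlonglongrightarrow> v"
  shows "v \<in> F x0"
proof (rule ccontr)
  assume "v \<notin> F x0"
  then obtain a c where ac: "inner a v < c" "\<And>f. f \<in> F x0 \<Longrightarrow> c < inner a f"
    using separating_hyperplane_closed_point[OF cvx[OF x0] osc_rel_closed_values[OF osc x0]] by blast
  obtain \<rho> where \<rho>: "\<rho> > 0" "\<And>z f. z \<in> C \<Longrightarrow> z \<in> ball x0 \<rho> \<Longrightarrow> f \<in> F z \<Longrightarrow> c \<le> inner a f"
    using osc_rel_halfspace_near[OF osc lb x0 ac(2)] by blast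
  obtain N where N: "\<And>m. m \<ge> N \<Longrightarrow> e m < \<rho>"
    using e \<rho>(1) unfolding LIMSEQ_def by (auto simp: dist_real_def) (metis abs_less_iff)
  have "c \<le> inner a ((\<gamma> m (h m) - \<gamma> m 0) /\<^sub>R h m)" if "m \<ge> N" for m
  proof -
    have "(\<gamma> m (h m) - \<gamma> m 0) /\<^sub>R (h m - 0) \<in> {f. c \<le> inner a f}"
    proof (rule mean_value_arcD(4)[OF arcs order_refl mean_value_arcD(1)[OF arcs] order_refl
          closed_halfspace_ge convex_halfspace_ge])
      fix u assume u: "0 < u" "u < h m"
      have "\<gamma> m u \<in> ball x0 \<rho>" using near[OF u] N[OF that] by (simp add: dist_commute)
      moreover have "\<gamma> m u \<in> C" using mean_value_arcD(3)[OF arcs u] .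
      ultimately show "F (\<gamma> m u) \<subseteq> {f. c \<le> inner a f}" using \<rho>(2) by blast
    qed
    then show ?thesis by simp
  qed
  then have "c \<le> inner a v"
    by (intro LIMSEQ_le_const[OF tendsto_inner[OF tendsto_const quotients]]) blast
  then show False using ac(1) by simp
qed

lemma shrinking_arcs_quotients_converge:
  assumes arcs: "\<And>m. mean_value_arc C F (G m) (h m)" and h0: "h \<longlonglongrightarrow> 0"
    and start: "\<And>m. dist (G m 0) x0 \<le> (h m)\<^sup>2"
    and speed: "\<And>m u. 0 \<le> u \<Longrightarrow> u \<le> h m \<Longrightarrow> norm (G m u - G m 0) \<le> M * u"
  obtains p v where "strict_mono (p :: nat \<Rightarrow> nat)"
    "(\<lambda>m. (G (p m) (h (p m)) - G (p m) 0) /\<^sub>R h (p m)) \<longlonglongrightarrow> v"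
    "(\<lambda>m. (G (p m) (h (p m)) - x0) /\<^sub>R h (p m)) \<longlonglongrightarrow> v"
proof -
  have h: "h m > 0" for m using mean_value_arcD(1)[OF arcs] .
  obtain H where "\<forall>m. norm (h m) \<le> H" using BseqE[OF convergent_imp_Bseq[OF convergentI[OF h0]]] by blast
  then have H: "h m \<le> H" for m by (metis abs_ge_self order_trans real_norm_def)
  define q where "q m = (G m (h m) - G m 0) /\<^sub>R h m" for m
  define w where "w m = (G m (h m) - x0) /\<^sub>R h m" for m
  have q_bound: "norm (q m) \<le> M" for m
  proof -
    have "inverse (h m) * norm (G m (h m) - G m 0) \<le> inverse (h m) * (M * h m)"
      using speed[of "h m" m] h[of m] by (intro mult_left_mono) auto
    also have "\<dots> = M" using h[of m] by simp
    finally show ?thesis using h[of m] by (simp add: q_def)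
  qed
  have wq: "norm (w m - q m) \<le> h m" for m
  proof -
    have "w m - q m = (G m 0 - x0) /\<^sub>R h m" by (simp add: w_def q_def algebra_simps)
    then have "norm (w m - q m) = dist (G m 0) x0 / h m"
      using h[of m] by (simp add: dist_norm divide_inverse mult.commute)
    also have "\<dots> \<le> (h m)\<^sup>2 / h m" using start[of m] h[of m] by (simp add: divide_right_mono)
    finally show ?thesis by (simp add: power2_eq_square)
  qed
  have "w m \<in> cball 0 (M + H)" for m
    using norm_triangle_ineq[of "q m" "w m - q m"] q_bound[of m] wq[of m] H[of m] by simp
  then obtain v p where p: "strict_mono (p :: nat \<Rightarrow> nat)" and v: "(w \<circ> p) \<longlonglongrightarrow> v"
    using seq_compactE[OF compact_imp_seq_compact[OF compact_cball], of w] by metis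
  have "(\<lambda>m. w m - q m) \<longlonglongrightarrow> 0"
    by (rule Lim_null_comparison[OF _ h0]) (use wq in \<open>blast intro: always_eventually\<close>)
  then have "(\<lambda>m. (w \<circ> p) m - (q \<circ> p) m) \<longlonglongrightarrow> 0"
    using LIMSEQ_subseq_LIMSEQ[OF _ p] by (simp add: o_def)
  then have "(q \<circ> p) \<longlonglongrightarrow> v"
    using Lim_transform[OF v, of "q \<circ> p"] tendsto_minus[of "\<lambda>m. (w \<circ> p) m - (q \<circ> p) m" 0]
    by (simp add: o_def)
  then show ?thesis using that[OF p] v by (simp add: q_def w_def o_def)
qed

lemma shrinking_mean_value_arcs_velocity:
  fixes F :: "'a::euclidean_space \<Rightarrow> 'a set"
  assumes clC: "closed C" and osc: "osc_rel F C" and lb: "locally_bounded_rel F C"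
    and cvx: "\<And>x. x \<in> C \<Longrightarrow> convex (F x)" and x0: "x0 \<in> C"
    and arcs: "\<And>m. mean_value_arc C F (G m) (h m)" and h0: "h \<longlonglongrightarrow> 0"
    and start: "\<And>m. dist (G m 0) x0 \<le> (h m)\<^sup>2"
    and speed: "\<And>m u. 0 \<le> u \<Longrightarrow> u \<le> h m \<Longrightarrow> norm (G m u - G m 0) \<le> M * u"
  shows "F x0 \<inter> tangent_cone C x0 \<noteq> {}"
proof -
  have h: "h m > 0" for m using mean_value_arcD(1)[OF arcs] .
  obtain p v where p: "strict_mono (p :: nat \<Rightarrow> nat)"
    and q: "(\<lambda>m. (G (p m) (h (p m)) - G (p m) 0) /\<^sub>R h (p m)) \<longlonglongrightarrow> v"
    and w: "(\<lambda>m. (G (p m) (h (p m)) - x0) /\<^sub>R h (p m)) \<longlonglongrightarrow> v"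
    using shrinking_arcs_quotients_converge[OF arcs h0 start speed] by blast
  have "v \<in> tangent_cone C x0"
    unfolding tangent_cone_def
  proof (intro CollectI exI conjI allI)
    fix i
    show "(h \<circ> p) i > 0" using h by simp
    have "x0 + h (p i) *\<^sub>R ((G (p i) (h (p i)) - x0) /\<^sub>R h (p i)) = G (p i) (h (p i))"
      using h[of "p i"] by simp
    then show "x0 + (h \<circ> p) i *\<^sub>R ((G (p i) (h (p i)) - x0) /\<^sub>R h (p i)) \<in> C"
      using mean_value_arc_end_in[OF arcs clC] by simp
  next
    show "(h \<circ> p) \<longlonglongrightarrow> 0" using LIMSEQ_subseq_LIMSEQ[OF h0 p] .
  qed (rule w)
  moreover have "v \<in> F x0"
  proof -
    obtain H where "\<forall>m. norm (h m) \<le> H" using BseqE[OF convergent_imp_Bseq[OF convergentI[OF h0]]] by blast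
    then have H: "h m \<le> H" for m by (metis abs_ge_self order_trans real_norm_def)
    have "norm (G 0 (h 0) - G 0 0) \<le> M * h 0" using speed[of "h 0" 0] h[of 0] by simp
    then have "0 \<le> M * h 0" using norm_ge_zero order_trans by blast
    then have "0 \<le> M" using h[of 0] by (simp add: zero_le_mult_iff)
    have near: "dist (G m u) x0 \<le> (M + H) * h m" if "0 < u" "u < h m" for m u
    proof -
      have "M * u \<le> M * h m" using that \<open>0 \<le> M\<close> by (intro mult_left_mono) auto
      then have "norm (G m u - G m 0) \<le> M * h m" using speed[of u m] that by simp
      moreover have "(h m)\<^sup>2 \<le> H * h m" using H[of m] h[of m] by (simp add: power2_eq_square)
      ultimately have "norm (G m u - G m 0) + dist (G m 0) x0 \<le> (M + H) * h m"
        using start[of m] by (simp add: algebra_simps)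
      then show ?thesis using dist_triangle[of "G m u" x0 "G m 0"] by (simp add: dist_norm)
    qed
    show ?thesis
    proof (rule mean_value_arc_quotient_limit[OF osc lb cvx x0, of "G \<circ> p" "h \<circ> p"])
      show "mean_value_arc C F ((G \<circ> p) m) ((h \<circ> p) m)" for m using arcs by simp
      show "((\<lambda>m. (M + H) * h m) \<circ> p) \<longlonglongrightarrow> 0"
        using LIMSEQ_subseq_LIMSEQ[OF tendsto_mult_right_zero[OF h0] p] .
      show "dist ((G \<circ> p) m u) x0 \<le> ((\<lambda>m. (M + H) * h m) \<circ> p) m" if "0 < u" "u < (h \<circ> p) m" for m u
        using near that by simp
      show "(\<lambda>m. ((G \<circ> p) m ((h \<circ> p) m) - (G \<circ> p) m 0) /\<^sub>R (h \<circ> p) m) \<longlonglongrightarrow> v"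
        unfolding comp_def by (rule q)
    qed
  qed
  ultimately show ?thesis by blast
qed

lemma mean_value_arcs_tangent_velocity:
  fixes F :: "'a::euclidean_space \<Rightarrow> 'a set"
  assumes clC: "closed C" and osc: "osc_rel F C" and lb: "locally_bounded_rel F C"
    and cvx: "\<And>x. x \<in> C \<Longrightarrow> convex (F x)"
    and arcs: "\<And>n. mean_value_arc C F (\<Gamma> n) \<sigma>" and start: "(\<lambda>n. \<Gamma> n 0) \<longlonglongrightarrow> x0"
  shows "x0 \<in> C" "F x0 \<inter> tangent_cone C x0 \<noteq> {}"
proof -
  show x0: "x0 \<in> C"
    using closed_sequentially[OF clC _ start] mean_value_arc_start_in[OF arcs clC] by blast
  obtain \<rho> M where \<rho>M: "\<rho> > 0" "M > 0"
    and bound: "\<And>z f. z \<in> C \<Longrightarrow> z \<in> ball x0 \<rho> \<Longrightarrow> f \<in> F z \<Longrightarrow> norm f \<le> M"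
    using locally_bounded_relE[OF lb x0] by blast
  have \<sigma>: "\<sigma> > 0" using mean_value_arcD(1)[OF arcs] .
  define h1 where "h1 = min \<sigma> (\<rho> / (4 * M))"
  have h1: "h1 > 0" "h1 \<le> \<sigma>" "M * h1 \<le> \<rho> / 4"
    using \<sigma> \<rho>M by (auto simp: h1_def min_def field_simps)
  define h where "h m = h1 / (real m + 1)" for m :: nat
  have h: "h m > 0" "h m \<le> h1" for m
    using h1 by (auto simp: h_def divide_le_eq)
  have h0: "h \<longlonglongrightarrow> 0" by (rule LIMSEQ_norm_le_div_Suc[of _ h1]) (use h1 in \<open>simp add: h_def\<close>)
  \<comment> \<open>Arcs of length \<open>h m\<close> starting within \<open>(h m)\<^sup>2\<close> of \<open>x0\<close>: their difference quotients taken
    from \<open>x0\<close> then differ from their own by at most \<open>h m\<close>.\<close>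
  have "\<exists>n. dist (\<Gamma> n 0) x0 < min (\<rho> / 2) ((h m)\<^sup>2)" for m
  proof -
    have "min (\<rho> / 2) ((h m)\<^sup>2) > 0" using \<rho>M h[of m] by simp
    then show ?thesis using start unfolding LIMSEQ_def by blast
  qed
  then obtain nn where nn: "\<And>m. dist (\<Gamma> (nn m) 0) x0 < min (\<rho> / 2) ((h m)\<^sup>2)" by metis
  define G where "G m = \<Gamma> (nn m)" for m
  have G_arc: "mean_value_arc C F (G m) (h m)" for m
    unfolding G_def using mean_value_arc_restrict[OF arcs h(1)] h(2) h1(2) by (meson order_trans)
  show "F x0 \<inter> tangent_cone C x0 \<noteq> {}"
  proof (rule shrinking_mean_value_arcs_velocity[OF clC osc lb cvx x0 G_arc h0])
    show "dist (G m 0) x0 \<le> (h m)\<^sup>2" for m using nn[of m] by (simp add: G_def)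
    fix m u assume "0 \<le> u" "u \<le> h m"
    show "norm (G m u - G m 0) \<le> M * u"
    proof (rule mean_value_arc_speed[OF G_arc bound _ _ _ \<open>0 \<le> u\<close> \<open>u \<le> h m\<close>])
      show "dist (G m 0) x0 < \<rho> / 2" using nn[of m] by (simp add: G_def)
      have "M * h m \<le> M * h1" using \<rho>M h by (intro mult_left_mono) auto
      then show "M * h m < \<rho> / 2" using h1(3) \<rho>M(1) by linarith
    qed (use \<rho>M in auto)
  qed
qed

lemma mean_value_arc_start_far:
  fixes C K :: "'a::euclidean_space set" and F :: "'a \<Rightarrow> 'a set"
  assumes clC: "closed C" and osc: "osc_rel F C" and lb: "locally_bounded_rel F C"
    and cvx: "\<And>x. x \<in> C \<Longrightarrow> convex (F x)" and K: "compact K"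
    and transversal: "\<And>x. x \<in> K \<Longrightarrow> x \<in> C \<Longrightarrow> F x \<inter> tangent_cone C x = {}"
  obtains r where "r > 0" "\<And>\<gamma> k. mean_value_arc C F \<gamma> \<sigma> \<Longrightarrow> k \<in> K \<Longrightarrow> r \<le> dist (\<gamma> 0) k"
proof -
  have "\<exists>r>0. \<forall>\<gamma> k. mean_value_arc C F \<gamma> \<sigma> \<longrightarrow> k \<in> K \<longrightarrow> r \<le> dist (\<gamma> 0) k"
  proof (rule ccontr)
    assume close: "\<not> ?thesis"
    have "\<forall>n::nat. \<exists>\<gamma> k. mean_value_arc C F \<gamma> \<sigma> \<and> k \<in> K \<and> dist (\<gamma> 0) k < 1 / (real n + 1)"
    proof
      fix n :: nat
      have "1 / (real n + 1) > 0" by simp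
      then show "\<exists>\<gamma> k. mean_value_arc C F \<gamma> \<sigma> \<and> k \<in> K \<and> dist (\<gamma> 0) k < 1 / (real n + 1)"
        using close not_le by blast
    qed
    then obtain \<Gamma> kk where \<Gamma>: "\<And>n. mean_value_arc C F (\<Gamma> n) \<sigma>" "\<And>n. kk n \<in> K"
      "\<And>n. dist (\<Gamma> n 0) (kk n) < 1 / (real n + 1)" by metis
    obtain x0 r where x0: "x0 \<in> K" "strict_mono (r :: nat \<Rightarrow> nat)" "(kk \<circ> r) \<longlonglongrightarrow> x0"
      using seq_compactE[OF compact_imp_seq_compact[OF K], of kk] \<Gamma>(2) by metis
    have "(\<lambda>n. \<Gamma> (r n) 0 - (kk \<circ> r) n) \<longlonglongrightarrow> 0"
    proof (rule LIMSEQ_norm_le_div_Suc)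
      fix n
      have "norm (\<Gamma> (r n) 0 - (kk \<circ> r) n) < 1 / (real (r n) + 1)"
        using \<Gamma>(3)[of "r n"] by (simp add: dist_norm)
      also have "\<dots> \<le> 1 / (real n + 1)"
        using seq_suble[OF x0(2), of n] by (intro divide_left_mono) auto
      finally show "norm (\<Gamma> (r n) 0 - (kk \<circ> r) n) \<le> 1 / (real n + 1)" by simp
    qed
    then have "(\<lambda>n. \<Gamma> (r n) 0) \<longlonglongrightarrow> x0" by (rule Lim_transform[OF x0(3)])
    from mean_value_arcs_tangent_velocity[OF clC osc lb cvx \<Gamma>(1) this] show False
      using transversal x0(1) by blast
  qed
  then show ?thesis using that by blast
qed

lemma compact_UN_cball:
  fixes Q :: "'a::euclidean_space set"
  assumes "compact Q"
  shows "compact (\<Union>q\<in>Q. cball q r)"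
proof -
  have "(\<Union>q\<in>Q. cball q r) = {x + y | x y. x \<in> Q \<and> y \<in> cball 0 r}"
  proof (intro set_eqI iffI)
    fix z assume "z \<in> (\<Union>q\<in>Q. cball q r)"
    then obtain q where "q \<in> Q" "dist q z \<le> r" by auto
    then show "z \<in> {x + y | x y. x \<in> Q \<and> y \<in> cball 0 r}"
      by (intro CollectI exI[of _ q] exI[of _ "z - q"]) (auto simp: dist_norm norm_minus_commute)
  next
    fix z assume "z \<in> {x + y | x y. x \<in> Q \<and> y \<in> cball 0 r}"
    then obtain x y where "z = x + y" "x \<in> Q" "norm y \<le> r" by auto
    then have "dist x z \<le> r" by (simp add: dist_norm)
    then show "z \<in> (\<Union>q\<in>Q. cball q r)" using \<open>x \<in> Q\<close> by auto
  qed
  then show ?thesis using compact_sums[OF assms compact_cball[of 0 r]] by simp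
qed

lemma locally_bounded_mean_value_arc_displacement:
  fixes F :: "'a::euclidean_space \<Rightarrow> 'a set"
  assumes lb: "locally_bounded_rel F C" and clC: "closed C" and K: "compact K"
  obtains M r where "M > 0" "r > 0"
    "\<And>\<gamma> h. mean_value_arc C F \<gamma> h \<Longrightarrow> h \<le> r \<Longrightarrow> \<gamma> 0 \<in> C \<Longrightarrow> (\<exists>k\<in>K. dist (\<gamma> 0) k < 1) \<Longrightarrow>
       norm (\<gamma> h - \<gamma> 0) \<le> M * h"
proof -
  define W where "W = C \<inter> (\<Union>k\<in>K. cball k 1)"
  have "compact W" unfolding W_def by (rule closed_Int_compact[OF clC compact_UN_cball[OF K]])
  then obtain \<rho> M where \<rho>M: "\<rho> > 0" "M > 0"
    and bound: "\<And>w z f. w \<in> W \<Longrightarrow> z \<in> C \<Longrightarrow> dist z w < \<rho> \<Longrightarrow> f \<in> F z \<Longrightarrow> norm f \<le> M"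
    using locally_bounded_rel_compactE[OF lb] unfolding W_def by blast
  show ?thesis
  proof (rule that[OF \<rho>M(2), of "\<rho> / (4 * M)"])
    show "\<rho> / (4 * M) > 0" using \<rho>M by simp
    fix \<gamma> h assume arc: "mean_value_arc C F \<gamma> h" and h: "h \<le> \<rho> / (4 * M)"
      and start: "\<gamma> 0 \<in> C" "\<exists>k\<in>K. dist (\<gamma> 0) k < 1"
    obtain k where "k \<in> K" "dist (\<gamma> 0) k < 1" using start(2) by blast
    then have "\<gamma> 0 \<in> cball k 1" by (simp add: dist_commute)
    then have "\<gamma> 0 \<in> W" using start(1) \<open>k \<in> K\<close> unfolding W_def by blast
    have "M * h \<le> M * (\<rho> / (4 * M))" using h \<rho>M by (intro mult_left_mono) auto
    then have "M * h < \<rho> / 2" using \<rho>M by simp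
    show "norm (\<gamma> h - \<gamma> 0) \<le> M * h"
    proof (rule mean_value_arc_speed[OF arc, where c = "\<gamma> 0" and \<rho> = \<rho>])
      show "\<And>z f. z \<in> C \<Longrightarrow> z \<in> ball (\<gamma> 0) \<rho> \<Longrightarrow> f \<in> F z \<Longrightarrow> norm f \<le> M"
        using bound[OF \<open>\<gamma> 0 \<in> W\<close>] by (simp add: dist_commute)
    qed (use \<open>M * h < \<rho> / 2\<close> \<rho>M mean_value_arcD(1)[OF arc] in auto)
  qed
qed

lemma rhoA_witness:
  assumes "rhoA C D G x y < e" "setA C D G \<noteq> {}"
  obtains p q where "(p, q) \<in> setA C D G" "dist x p < e" "dist y q < e"
proof -
  have "(INF a\<in>setA C D G. dist (x, y) a) < e"
    using assms by (simp add: rhoA_def infdist_notempty)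
  then obtain a where a: "a \<in> setA C D G" "dist (x, y) a < e"
    using assms(2) by (subst (asm) cINF_less_iff) (auto intro: bdd_belowI[of _ 0])
  obtain p q where pq: "a = (p, q)" by (cases a)
  have "dist x p \<le> dist (x, y) a" "dist y q \<le> dist (x, y) a"
    using dist_fst_le[of "(x, y)" a] dist_snd_le[of "(x, y)" a] pq by auto
  then show ?thesis using that a pq by force
qed

lemma rhoA_le_commute: "rhoA C D G x y \<le> rhoA C D G y x"
proof (cases "setA C D G = {}")
  case True
  then show ?thesis by (simp add: rhoA_def infdist_def)
next
  case False
  have "infdist (x, y) (setA C D G) \<le> dist (y, x) a" if a: "a \<in> setA C D G" for a
  proof -
    obtain p q where pq: "a = (p, q)" by (cases a)
    have "(q, p) \<in> setA C D G" using a pq unfolding setA_def by auto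
    then have "infdist (x, y) (setA C D G) \<le> dist (x, y) (q, p)" by (rule infdist_le)
    also have "\<dots> = dist (y, x) a" using pq by (simp add: dist_Pair_Pair add.commute)
    finally show ?thesis .
  qed
  then show ?thesis using False by (simp add: rhoA_def infdist_notempty cINF_greatest)
qed

lemma rhoA_commute: "rhoA C D G x y = rhoA C D G y x"
  using rhoA_le_commute[of C D G x y] rhoA_le_commute[of C D G y x] by simp

lemma rhoA_le_norm:
  assumes "x \<in> C \<union> D"
  shows "rhoA C D G x y \<le> norm (x - y)"
proof -
  have "(x, x) \<in> setA C D G" using assms by (auto simp: setA_def)
  then have "infdist (x, y) (setA C D G) \<le> dist (x, y) (x, x)" by (rule infdist_le)
  then show ?thesis by (simp add: rhoA_def dist_Pair_Pair dist_norm norm_minus_commute)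
qed

lemma setA_nonempty:
  assumes "is_solution C F D G E \<phi>"
  shows "setA C D G \<noteq> {}"
  using solution_initial[OF assms] by (auto simp: setA_def)

locale transversal_system =
  fixes C D :: "'a::euclidean_space set" and F G :: "'a \<Rightarrow> 'a set" and g :: "'a \<Rightarrow> 'a"
  assumes closed_C: "closed C" and closed_D: "closed D"
    and osc_F: "osc_rel F C" and lb_F: "locally_bounded_rel F C"
    and convex_F: "\<And>x. x \<in> C \<Longrightarrow> convex (F x)"
    and osc_G: "osc_rel G D" and lb_G: "locally_bounded_rel G D"
    and G_eq: "\<And>x. x \<in> D \<Longrightarrow> G x = {g x}"
    and proper_G: "\<forall>K. compact K \<longrightarrow> compact {x\<in>D. G x \<inter> K \<noteq> {}}"
    and jump_leaves_D: "\<And>x. x \<in> D \<Longrightarrow> g x \<notin> D"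
    and transversal_D: "\<And>x. x \<in> C \<Longrightarrow> x \<in> D \<Longrightarrow> F x \<inter> tangent_cone C x = {}"
    and transversal_jump_image:
      "\<And>x. x \<in> D \<Longrightarrow> g x \<in> C \<Longrightarrow> uminus ` F (g x) \<inter> tangent_cone C (g x) = {}"
begin

lemma osc_uminus_F: "osc_rel (\<lambda>x. uminus ` F x) C"
  by (rule osc_rel_uminus[OF osc_F])

lemma lb_uminus_F: "locally_bounded_rel (\<lambda>x. uminus ` F x) C"
  by (rule locally_bounded_rel_uminus[OF lb_F])

lemma convex_uminus_F: "x \<in> C \<Longrightarrow> convex (uminus ` F x)"
  by (simp add: convex_negations convex_F)

lemma continuous_on_g: "continuous_on D g"
  by (rule osc_rel_single_valued_continuous_on[OF osc_G lb_G G_eq])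

lemma closed_jump_image: "closed (g ` D)"
  by (rule proper_single_valued_closed_image[OF osc_G G_eq proper_G])

lemma solution_jump_eq:
  assumes "is_solution C F D G E \<phi>" "(t, j) \<in> E" "(t, Suc j) \<in> E"
  shows "\<phi> (t, j) \<in> D" "\<phi> (t, Suc j) = g (\<phi> (t, j))"
  using solution_jump[OF assms] G_eq by auto

lemma solution_no_flow_from_D:
  assumes sol: "is_solution C F D G E \<phi>" and "(a, j) \<in> E" "(b, j) \<in> E" "a < b"
  shows "\<phi> (a, j) \<notin> D"
proof
  assume D: "\<phi> (a, j) \<in> D"
  have "\<phi> (a, j) \<in> C" using solution_flows_in_closed_C[OF sol assms(2,3,4) order_refl _ closed_C] assms(4) by simp
  then obtain r where "r > 0"
    and "\<And>\<gamma> k. mean_value_arc C F \<gamma> (b - a) \<Longrightarrow> k \<in> {\<phi> (a, j)} \<Longrightarrow> r \<le> dist (\<gamma> 0) k"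
    using mean_value_arc_start_far[OF closed_C osc_F lb_F convex_F, of "{\<phi> (a, j)}"] transversal_D D
    by auto
  moreover have "mean_value_arc C F (\<lambda>u. \<phi> (a + u, j)) (b - a)"
    using solution_mean_value_arc[OF sol assms(2), of "b - a"] assms(3,4) by simp
  ultimately show False by force
qed

lemma solution_ordered_time_domain:
  assumes sol: "is_solution C F D G E \<phi>"
  shows "ordered_time_domain E"
  unfolding ordered_time_domain_def
proof (intro allI impI)
  fix t j t' j' assume tj: "(t, j) \<in> E" "(t', j') \<in> E" "j < j'"
  obtain \<tau> where \<tau>: "\<tau> \<le> t'" "(\<tau>, j) \<in> E" "(\<tau>, Suc j) \<in> E"
    using hybrid_time_domain_jump_below[OF solution_domain[OF sol] tj(2,3)] by blast
  show "t \<le> t'"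
    using solution_no_flow_from_D[OF sol \<tau>(2) tj(1)] solution_jump_eq(1)[OF sol \<tau>(2,3)] \<tau>(1)
    by fastforce
qed

end

section \<open>Comparing two solutions\<close>

definition rho_close ::
  "'a::euclidean_space set \<Rightarrow> 'a set \<Rightarrow> ('a \<Rightarrow> 'a set) \<Rightarrow> (real \<times> nat) set \<Rightarrow> (real \<times> nat \<Rightarrow> 'a) \<Rightarrow>
   (real \<times> nat) set \<Rightarrow> (real \<times> nat \<Rightarrow> 'a) \<Rightarrow> real \<Rightarrow> real \<Rightarrow> bool" where
  "rho_close C D G E1 \<psi>1 E2 \<psi>2 T \<epsilon> \<longleftrightarrow>
     (\<forall>(t, j)\<in>E1. T \<le> t \<longrightarrow> (\<exists>j'. (t, j') \<in> E2 \<and> rhoA C D G (\<psi>1 (t, j)) (\<psi>2 (t, j')) < \<epsilon>))"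

definition graph_close ::
  "(real \<times> nat) set \<Rightarrow> (real \<times> nat \<Rightarrow> 'a::real_normed_vector) \<Rightarrow>
   (real \<times> nat) set \<Rightarrow> (real \<times> nat \<Rightarrow> 'a) \<Rightarrow> real \<Rightarrow> real \<Rightarrow> bool" where
  "graph_close E1 \<psi>1 E2 \<psi>2 T \<epsilon> \<longleftrightarrow>
     (\<forall>(t, j)\<in>E1. T \<le> t \<longrightarrow> (\<exists>(t', j')\<in>E2. \<bar>t - t'\<bar> < \<epsilon> \<and> norm (\<psi>1 (t, j) - \<psi>2 (t', j')) < \<epsilon>))"

text \<open>The jump points that a solution passes within distance \<open>1\<close> of, before or after the jump.
  Only these enter the comparison of a solution with others; assumption (iv) of the theorem puts them
  into a compact set.\<close>

definition near_jump_points ::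
  "'a::real_normed_vector set \<Rightarrow> ('a \<Rightarrow> 'a) \<Rightarrow> (real \<times> nat) set \<Rightarrow> (real \<times> nat \<Rightarrow> 'a) \<Rightarrow> 'a set" where
  "near_jump_points D g E \<psi> = {d \<in> D. \<exists>p\<in>E. dist (\<psi> p) d < 1 \<or> dist (\<psi> p) (g d) < 1}"

locale comparison_constants = transversal_system C D F G g for C D :: "'a::euclidean_space set" and F G g +
  fixes Q Q' :: "'a set" and \<eta> \<epsilon>w \<sigma> lsp sep \<delta>g :: real
  assumes Q_sub_Q': "Q \<subseteq> Q'" and Q'_sub_D: "Q' \<subseteq> D"
    and Q'_nbhd: "\<And>d q. d \<in> D \<Longrightarrow> q \<in> Q \<Longrightarrow> dist d q < 1 \<Longrightarrow> d \<in> Q'"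
    and no_flow_near_Q: "\<And>\<gamma> k. mean_value_arc C F \<gamma> \<sigma> \<Longrightarrow> k \<in> Q \<Longrightarrow> 2 * \<epsilon>w \<le> dist (\<gamma> 0) k"
    and no_reverse_flow_near_gQ':
      "\<And>\<gamma> k. mean_value_arc C (\<lambda>x. uminus ` F x) \<gamma> \<sigma> \<Longrightarrow> k \<in> g ` Q' \<Longrightarrow> 2 * \<epsilon>w \<le> dist (\<gamma> 0) k"
    and displacement: "\<And>\<gamma> h. mean_value_arc C F \<gamma> h \<Longrightarrow> h \<le> \<sigma> \<Longrightarrow> \<gamma> 0 \<in> C \<Longrightarrow>
        (\<exists>k\<in>Q' \<union> g ` Q'. dist (\<gamma> 0) k < 1) \<Longrightarrow> norm (\<gamma> h - \<gamma> 0) \<le> lsp"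
    and reverse_displacement: "\<And>\<gamma> h. mean_value_arc C (\<lambda>x. uminus ` F x) \<gamma> h \<Longrightarrow> h \<le> \<sigma> \<Longrightarrow> \<gamma> 0 \<in> C \<Longrightarrow>
        (\<exists>k\<in>Q' \<union> g ` Q'. dist (\<gamma> 0) k < 1) \<Longrightarrow> norm (\<gamma> h - \<gamma> 0) \<le> lsp"
    and sep_Q'_gD: "\<And>a b. a \<in> Q' \<Longrightarrow> b \<in> D \<Longrightarrow> sep \<le> dist a (g b)"
    and sep_gQ'_D: "\<And>a b. a \<in> Q' \<Longrightarrow> b \<in> D \<Longrightarrow> sep \<le> dist (g a) b"
    and g_ucont: "\<And>a b. a \<in> Q' \<Longrightarrow> b \<in> Q' \<Longrightarrow> dist a b < \<delta>g \<Longrightarrow> dist (g a) (g b) < \<eta> / 4"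
    and \<epsilon>w_pos: "\<epsilon>w > 0" and \<sigma>_pos: "\<sigma> > 0" and lsp_nonneg: "lsp \<ge> 0" and \<sigma>_le: "\<sigma> \<le> \<eta>"
    and budget_\<delta>g: "lsp + \<epsilon>w < \<delta>g" and budget_\<eta>: "4 * \<epsilon>w + lsp < \<eta>"
    and budget_sep: "3 * \<epsilon>w + 2 * lsp < sep"
    and budget_1: "3 * \<epsilon>w + lsp < 1"
begin

lemma \<epsilon>w_lt_1: "\<epsilon>w < 1"
  using budget_1 \<epsilon>w_pos lsp_nonneg by linarith

lemma near_Q'I: "p \<in> Q' \<Longrightarrow> dist x p < \<epsilon>w \<Longrightarrow> \<exists>k\<in>Q' \<union> g ` Q'. dist x k < 1"
  using \<epsilon>w_lt_1 by (intro bexI[of _ p]) auto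

lemma near_jump_image_Q'I: "p \<in> Q' \<Longrightarrow> dist x (g p) < \<epsilon>w \<Longrightarrow> \<exists>k\<in>Q' \<union> g ` Q'. dist x k < 1"
  using \<epsilon>w_lt_1 by (intro bexI[of _ "g p"]) auto

context
  fixes E :: "(real \<times> nat) set" and \<psi> :: "real \<times> nat \<Rightarrow> 'a"
  assumes sol: "is_solution C F D G E \<psi>"
begin

lemma solution_forward_displacement:
  assumes "(a, j) \<in> E" "(b, j) \<in> E" "a \<le> b" "b - a \<le> \<sigma>" "\<exists>k\<in>Q' \<union> g ` Q'. dist (\<psi> (a, j)) k < 1"
  shows "norm (\<psi> (b, j) - \<psi> (a, j)) \<le> lsp"
proof (cases "a = b")
  case False
  then have "mean_value_arc C F (\<lambda>u. \<psi> (a + u, j)) (b - a)"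
    using solution_mean_value_arc[OF sol assms(1), of "b - a"] assms(2,3) by simp
  moreover have "\<psi> (a, j) \<in> C"
    using solution_flows_in_closed_C[OF sol assms(1,2) _ order_refl _ closed_C] assms(3) False by simp
  ultimately show ?thesis using displacement assms(4,5) by fastforce
qed (use lsp_nonneg in simp)

lemma solution_backward_displacement:
  assumes "(a, j) \<in> E" "(b, j) \<in> E" "a \<le> b" "b - a \<le> \<sigma>" "\<exists>k\<in>Q' \<union> g ` Q'. dist (\<psi> (b, j)) k < 1"
  shows "norm (\<psi> (a, j) - \<psi> (b, j)) \<le> lsp"
proof (cases "a = b")
  case False
  then have "mean_value_arc C (\<lambda>x. uminus ` F x) (\<lambda>u. \<psi> (b - u, j)) (b - a)"
    using solution_reversed_mean_value_arc[OF sol _ assms(2), of "b - a"] assms(1,3) by simp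
  moreover have "\<psi> (b, j) \<in> C"
    using solution_flows_in_closed_C[OF sol assms(1,2) _ _ order_refl closed_C] assms(3) False by simp
  ultimately show ?thesis using reverse_displacement assms(4,5) by fastforce
qed (use lsp_nonneg in simp)

lemma solution_jumped_long_ago:
  assumes "(t, Suc k) \<in> E" "(a, k) \<in> E" "(a, Suc k) \<in> E" "a \<le> t"
    and "p \<in> Q'" "dist (\<psi> (t, Suc k)) p < \<epsilon>w"
  shows "a \<le> t - \<sigma>"
proof (rule ccontr)
  assume "\<not> a \<le> t - \<sigma>"
  then have "norm (\<psi> (a, Suc k) - \<psi> (t, Suc k)) \<le> lsp"
    using near_Q'I[OF assms(5,6)] by (intro solution_backward_displacement[OF assms(3,1,4)]) auto
  then have "dist p (g (\<psi> (a, k))) < \<epsilon>w + lsp"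
    using assms(6) solution_jump_eq(2)[OF sol assms(2,3)]
    by (metis add_less_le_mono dist_commute dist_norm dist_triangle_lt)
  moreover have "sep \<le> dist p (g (\<psi> (a, k)))"
    using sep_Q'_gD[OF assms(5) solution_jump_eq(1)[OF sol assms(2,3)]] .
  ultimately show False using budget_sep \<epsilon>w_pos lsp_nonneg by linarith
qed

lemma solution_near_Q'_early_flow:
  assumes tj: "(t, j) \<in> E" and t: "t < \<sigma>" and "p \<in> Q'" "dist (\<psi> (t, j)) p < \<epsilon>w"
  shows "j = 0" "norm (\<psi> (0, 0) - \<psi> (t, 0)) \<le> lsp"
proof -
  obtain a where a: "a \<le> t" "(a, j) \<in> E" "j = 0 \<Longrightarrow> a = 0"
    "\<And>k. j = Suc k \<Longrightarrow> (a, k) \<in> E \<and> (a, Suc k) \<in> E"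
    by (rule hybrid_time_domain_entry[OF solution_domain[OF sol] tj]) (rule that)
  show j: "j = 0"
  proof (cases j)
    case (Suc k)
    then have "a \<le> t - \<sigma>" using solution_jumped_long_ago[of t k a p] a assms by auto
    then show ?thesis using hybrid_time_domain_nonneg[OF solution_domain[OF sol] a(2)] t by simp
  qed
  show "norm (\<psi> (0, 0) - \<psi> (t, 0)) \<le> lsp"
    using a(2,3) tj j near_Q'I[OF assms(3,4)] hybrid_time_domain_nonneg[OF solution_domain[OF sol] tj] t
    by (intro solution_backward_displacement) auto
qed

lemma solution_near_Q_jumps_soon:
  assumes tc: "t_complete E" and tj: "(t, j) \<in> E" and q: "q \<in> Q" "dist (\<psi> (t, j)) q < \<epsilon>w"
  obtains \<tau> where "t \<le> \<tau>" "\<tau> < t + \<sigma>" "(\<tau>, Suc j) \<in> E" "dist (\<psi> (\<tau>, Suc j)) (g q) < \<eta> / 4"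
proof -
  have "(t + \<sigma>, j) \<notin> E"
  proof
    assume "(t + \<sigma>, j) \<in> E"
    then have "mean_value_arc C F (\<lambda>u. \<psi> (t + u, j)) \<sigma>"
      using solution_mean_value_arc[OF sol tj _ \<sigma>_pos] by simp
    from no_flow_near_Q[OF this q(1)] show False using q(2) \<epsilon>w_pos by simp
  qed
  then obtain \<tau> where \<tau>: "t \<le> \<tau>" "\<tau> < t + \<sigma>" "(\<tau>, j) \<in> E" "(\<tau>, Suc j) \<in> E"
    using hybrid_time_domain_flow_or_jump[OF solution_domain[OF sol]
        solution_ordered_time_domain[OF sol] tc tj \<sigma>_pos] by blast
  define z where "z = \<psi> (\<tau>, j)"
  have "q \<in> Q'" using q(1) Q_sub_Q' by blast
  then have "norm (z - \<psi> (t, j)) \<le> lsp"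
    unfolding z_def using near_Q'I[OF _ q(2)] \<tau> by (intro solution_forward_displacement[OF tj \<tau>(3)]) auto
  then have zq: "dist z q < lsp + \<epsilon>w"
    using q(2) dist_triangle[of z q "\<psi> (t, j)"] by (simp add: dist_norm)
  have "z \<in> D" using solution_jump_eq(1)[OF sol \<tau>(3,4)] by (simp add: z_def)
  then have "z \<in> Q'" using Q'_nbhd q(1) zq budget_1 \<epsilon>w_pos by simp
  then have "dist (g z) (g q) < \<eta> / 4" using g_ucont \<open>q \<in> Q'\<close> zq budget_\<delta>g by simp
  then show ?thesis
    using that[OF \<tau>(1,2,4)] solution_jump_eq(2)[OF sol \<tau>(3,4)] by (simp add: z_def)
qed

lemma solution_near_jump_image_entered_recently:
  assumes tj: "(t, j) \<in> E" and p: "p \<in> Q'" "dist (\<psi> (t, j)) (g p) < \<epsilon>w"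
  obtains a where "t - \<sigma> < a" "a \<le> t" "(a, j) \<in> E" "j = 0 \<Longrightarrow> a = 0"
    "\<And>k. j = Suc k \<Longrightarrow> (a, k) \<in> E \<and> (a, Suc k) \<in> E"
proof -
  obtain a where a: "a \<le> t" "(a, j) \<in> E" "j = 0 \<Longrightarrow> a = 0"
    "\<And>k. j = Suc k \<Longrightarrow> (a, k) \<in> E \<and> (a, Suc k) \<in> E"
    by (rule hybrid_time_domain_entry[OF solution_domain[OF sol] tj]) (rule that)
  have "t - \<sigma> < a"
  proof (rule ccontr)
    assume "\<not> t - \<sigma> < a"
    then have "(t - \<sigma>, j) \<in> E"
      using hybrid_time_domain_interval[OF solution_domain[OF sol] a(2) tj, of "t - \<sigma>"] \<sigma>_pos by simp
    then have "mean_value_arc C (\<lambda>x. uminus ` F x) (\<lambda>u. \<psi> (t - u, j)) \<sigma>"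
      using solution_reversed_mean_value_arc[OF sol _ tj \<sigma>_pos] by simp
    from no_reverse_flow_near_gQ'[OF this] show False using p \<epsilon>w_pos by force
  qed
  then show ?thesis using that a by blast
qed

end

lemma rhoA_near_jump_state:
  assumes rho: "rhoA C D G x' z' < \<epsilon>w" "setA C D G \<noteq> {}"
    and p: "p \<in> Q" "dist x p < \<epsilon>w" and x': "dist x' x < \<epsilon>w + lsp"
    and z': "dist z' z < \<epsilon>w" and z: "z \<in> D"
  shows "norm (x - z) < \<eta>"
proof -
  obtain p' q' where pq': "(p', q') \<in> setA C D G" "dist x' p' < \<epsilon>w" "dist z' q' < \<epsilon>w"
    using rhoA_witness[OF rho] by blast
  have "p \<in> Q'" using p(1) Q_sub_Q' by blast
  consider "p' = q'" | "q' \<in> D" "p' = g q'" | "p' \<in> D" "q' = g p'"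
    using pq'(1) G_eq unfolding setA_def by auto
  then show ?thesis
  proof cases
    case 1
    have "dist x z \<le> dist x x' + dist x' p' + dist p' z' + dist z' z"
      using dist_triangle[of x z x'] dist_triangle[of x' z p'] dist_triangle[of p' z z'] by linarith
    then show ?thesis using x' pq'(2,3) z' 1 budget_\<eta> by (simp add: dist_commute dist_norm)
  next
    case 2
    have "dist p p' \<le> dist p x + dist x x' + dist x' p'"
      using dist_triangle[of p p' x] dist_triangle[of x p' x'] by linarith
    then have "dist p (g q') < 3 * \<epsilon>w + lsp" using p(2) x' pq'(2) 2(2) by (simp add: dist_commute)
    then show ?thesis using sep_Q'_gD[OF \<open>p \<in> Q'\<close> 2(1)] budget_sep lsp_nonneg by linarith
  next
    case 3
    have "dist p' p \<le> dist p' x' + dist x' x + dist x p"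
      using dist_triangle[of p' p x'] dist_triangle[of x' p x] by linarith
    then have "dist p' p < 1" using pq'(2) x' p(2) budget_1 by (simp add: dist_commute)
    then have "p' \<in> Q'" using Q'_nbhd[OF 3(1) p(1)] by simp
    have "dist (g p') z \<le> dist (g p') z' + dist z' z" by (rule dist_triangle)
    then have "dist (g p') z < 2 * \<epsilon>w" using pq'(3) 3(2) z' by (simp add: dist_commute)
    then show ?thesis using sep_gQ'_D[OF \<open>p' \<in> Q'\<close> z] budget_sep \<epsilon>w_pos lsp_nonneg by linarith
  qed
qed

context
  fixes E1 E2 :: "(real \<times> nat) set" and \<psi>1 \<psi>2 :: "real \<times> nat \<Rightarrow> 'a" and T0 :: real
  assumes s1: "is_solution C F D G E1 \<psi>1" and s2: "is_solution C F D G E2 \<psi>2" and tc2: "t_complete E2"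
    and cover: "near_jump_points D g E1 \<psi>1 \<subseteq> Q \<or> near_jump_points D g E2 \<psi>2 \<subseteq> Q"
    and T0: "0 \<le> T0"
    and close12: "rho_close C D G E1 \<psi>1 E2 \<psi>2 T0 \<epsilon>w" and close21: "rho_close C D G E2 \<psi>2 E1 \<psi>1 T0 \<epsilon>w"
    and init: "T0 = 0 \<Longrightarrow> norm (\<psi>1 (0, 0) - \<psi>2 (0, 0)) < \<epsilon>w"
begin

lemma near_jump_point_in_Q:
  assumes "(t, j) \<in> E1" "(t, j') \<in> E2" "d \<in> D"
    and "(dist (\<psi>1 (t, j)) (g d) < \<epsilon>w \<and> dist (\<psi>2 (t, j')) d < \<epsilon>w) \<or>
      (dist (\<psi>1 (t, j)) d < \<epsilon>w \<and> dist (\<psi>2 (t, j')) (g d) < \<epsilon>w)"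
  shows "d \<in> Q"
proof -
  have "d \<in> near_jump_points D g E1 \<psi>1"
    using assms \<epsilon>w_lt_1 unfolding near_jump_points_def by (auto intro!: bexI[of _ "(t, j)"])
  moreover have "d \<in> near_jump_points D g E2 \<psi>2"
    using assms \<epsilon>w_lt_1 unfolding near_jump_points_def by (auto intro!: bexI[of _ "(t, j')"])
  ultimately show ?thesis using cover by blast
qed

lemma initial_jump_impossible:
  assumes tj: "(t, j) \<in> E1" "(t, 0) \<in> E2" and t: "t < \<sigma>" and tT: "T0 + \<sigma> \<le> t \<or> T0 = 0"
    and p: "p \<in> Q'" "dist (\<psi>1 (t, j)) p < \<epsilon>w" "dist (\<psi>2 (t, 0)) (g p) < \<epsilon>w"
  shows False
proof -
  have "T0 = 0" using tT t T0 by linarith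
  have "j = 0" and x0: "norm (\<psi>1 (0, 0) - \<psi>1 (t, 0)) \<le> lsp"
    using solution_near_Q'_early_flow[OF s1 tj(1) t p(1,2)] by auto
  have y0: "norm (\<psi>2 (0, 0) - \<psi>2 (t, 0)) \<le> lsp"
    using hybrid_time_domain_origin[OF solution_domain[OF s2]] tj(2) t near_jump_image_Q'I[OF p(1,3)]
      hybrid_time_domain_nonneg[OF solution_domain[OF s2] tj(2)]
    by (intro solution_backward_displacement[OF s2]) auto
  let ?x = "\<psi>1 (t, 0)" and ?y = "\<psi>2 (t, 0)" and ?a = "\<psi>1 (0, 0)" and ?b = "\<psi>2 (0, 0)"
  have "dist p (g p) \<le> dist p ?x + dist ?x ?a + dist ?a ?b + dist ?b ?y + dist ?y (g p)"
    using dist_triangle[of p "g p" ?x] dist_triangle[of ?x "g p" ?a] dist_triangle[of ?a "g p" ?b]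
      dist_triangle[of ?b "g p" ?y] by linarith
  also have "\<dots> < 3 * \<epsilon>w + 2 * lsp"
  proof -
    have "dist p ?x < \<epsilon>w" "dist ?y (g p) < \<epsilon>w" using p(2,3) \<open>j = 0\<close> by (simp_all add: dist_commute)
    moreover have "dist ?x ?a \<le> lsp" "dist ?b ?y \<le> lsp" "dist ?a ?b < \<epsilon>w"
      using x0 y0 init[OF \<open>T0 = 0\<close>] by (simp_all add: dist_norm norm_minus_commute)
    ultimately show ?thesis by linarith
  qed
  finally show False using sep_Q'_gD[OF p(1)] Q'_sub_D p(1) budget_sep by force
qed

lemma pre_jump_state_close_at_jump:
  assumes tj: "(t, j) \<in> E1" and tT: "T0 + \<sigma> \<le> t \<or> T0 = 0" and p: "p \<in> Q" "dist (\<psi>1 (t, j)) p < \<epsilon>w"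
    and a2: "t - \<sigma> < a2" "(a2, i) \<in> E2" "(a2, Suc i) \<in> E2"
    and entry: "i = 0 \<Longrightarrow> a2 = 0" "\<And>k. i = Suc k \<Longrightarrow> (a2, k) \<in> E2 \<and> (a2, Suc k) \<in> E2"
  shows "norm (\<psi>1 (t, j) - \<psi>2 (a2, i)) < \<eta>"
proof (cases i)
  case (Suc k)
  then have "\<psi>2 (a2, i) = g (\<psi>2 (a2, k))" "\<psi>2 (a2, k) \<in> D"
    using solution_jump_eq[OF s2] entry(2) by auto
  then show ?thesis using jump_leaves_D solution_jump_eq(1)[OF s2 a2(2,3)] by auto
next
  case 0
  then have "a2 = 0" "t < \<sigma>" using entry(1) a2(1) by auto
  then have "T0 = 0" using tT T0 by linarith
  have "p \<in> Q'" using p(1) Q_sub_Q' by blast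
  have "j = 0" "norm (\<psi>1 (0, 0) - \<psi>1 (t, 0)) \<le> lsp"
    using solution_near_Q'_early_flow[OF s1 tj \<open>t < \<sigma>\<close> \<open>p \<in> Q'\<close> p(2)] by auto
  then have "norm (\<psi>1 (t, j) - \<psi>2 (a2, i)) < lsp + \<epsilon>w"
    using init[OF \<open>T0 = 0\<close>] norm_triangle_ineq[of "\<psi>1 (t, 0) - \<psi>1 (0, 0)" "\<psi>1 (0, 0) - \<psi>2 (0, 0)"]
      \<open>a2 = 0\<close> 0 by (simp add: norm_minus_commute)
  then show ?thesis using budget_\<eta> \<epsilon>w_pos by linarith
qed

lemma pre_jump_state_close_after_flow:
  assumes tj: "(t, j) \<in> E1" and tT: "T0 + \<sigma> \<le> t \<or> T0 = 0" and p: "p \<in> Q" "dist (\<psi>1 (t, j)) p < \<epsilon>w"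
    and a2: "t - \<sigma> < a2" "a2 \<le> t" "(a2, i) \<in> E2" "(a2, Suc i) \<in> E2"
    and a3: "a3 < a2" "(a3, i) \<in> E2"
  shows "norm (\<psi>1 (t, j) - \<psi>2 (a2, i)) < \<eta>"
proof -
  have "p \<in> Q'" using p(1) Q_sub_Q' by blast
  obtain a1 where a1: "a1 \<le> t" "(a1, j) \<in> E1" "j = 0 \<Longrightarrow> a1 = 0"
    "\<And>k. j = Suc k \<Longrightarrow> (a1, k) \<in> E1 \<and> (a1, Suc k) \<in> E1"
    by (rule hybrid_time_domain_entry[OF solution_domain[OF s1] tj]) (rule that)
  have "0 \<le> a1" "0 \<le> a3"
    using hybrid_time_domain_nonneg[OF solution_domain[OF s1] a1(2)]
      hybrid_time_domain_nonneg[OF solution_domain[OF s2] a3(2)] by auto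
  have a12: "a1 < a2"
  proof (cases j)
    case (Suc k)
    then have "a1 \<le> t - \<sigma>" using solution_jumped_long_ago[OF s1, of t k a1 p] tj a1 \<open>p \<in> Q'\<close> p(2) by auto
    then show ?thesis using a2(1) by simp
  qed (use a1(3) \<open>0 \<le> a3\<close> a3(1) in simp)
  have "T0 < a2" using tT a2(1) a12 \<open>0 \<le> a1\<close> by linarith
  have ea2: "(a2, j) \<in> E1"
    using hybrid_time_domain_interval[OF solution_domain[OF s1] a1(2) tj, of a2] a12 a2(2) by simp
  have x2: "norm (\<psi>1 (a2, j) - \<psi>1 (t, j)) \<le> lsp"
    using solution_backward_displacement[OF s1 ea2 tj a2(2)] a2(1) near_Q'I[OF \<open>p \<in> Q'\<close> p(2)] by simp
  \<comment> \<open>Compare the two solutions just before the jump of \<open>\<psi>2\<close>, where both are still flowing.\<close>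
  obtain s where s: "a1 < s" "a3 < s" "T0 < s" "s < a2"
    "dist (\<psi>1 (s, j)) (\<psi>1 (a2, j)) < \<epsilon>w" "dist (\<psi>2 (s, i)) (\<psi>2 (a2, i)) < \<epsilon>w"
    using continuous_on_approach_from_left[OF solution_continuous_on[OF s1 a1(2) ea2]
        solution_continuous_on[OF s2 a3(2) a2(3)] a12 a3(1) \<open>T0 < a2\<close> \<epsilon>w_pos] by blast
  have "(s, j) \<in> E1" "(s, i) \<in> E2"
    using hybrid_time_domain_interval[OF solution_domain[OF s1] a1(2) ea2, of s]
      hybrid_time_domain_interval[OF solution_domain[OF s2] a3(2) a2(3), of s] s by auto
  then obtain js where js: "(s, js) \<in> E1" "rhoA C D G (\<psi>1 (s, js)) (\<psi>2 (s, i)) < \<epsilon>w"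
    using close21 s(3) unfolding rho_close_def by (force simp: rhoA_commute)
  have "js = j"
  proof (rule ccontr)
    assume "js \<noteq> j"
    then consider "js < j" | "j < js" by linarith
    then show False
      using solution_ordered_time_domain[OF s1] js(1) a1(2) tj s a2(2)
      unfolding ordered_time_domain_def by (cases; fastforce)
  qed
  have "dist (\<psi>1 (s, j)) (\<psi>1 (t, j)) < \<epsilon>w + lsp"
    using dist_triangle[of "\<psi>1 (s, j)" "\<psi>1 (t, j)" "\<psi>1 (a2, j)"] s(5) x2 by (simp add: dist_norm)
  then show ?thesis
    using rhoA_near_jump_state[OF js(2)[unfolded \<open>js = j\<close>] setA_nonempty[OF s1] p] s(6)
      solution_jump_eq(1)[OF s2 a2(3,4)] by blast
qed

lemma pre_jump_state_close:
  assumes tj: "(t, j) \<in> E1" and tT: "T0 + \<sigma> \<le> t \<or> T0 = 0" and p: "p \<in> Q" "dist (\<psi>1 (t, j)) p < \<epsilon>w"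
    and a2: "t - \<sigma> < a2" "a2 \<le> t" "(a2, i) \<in> E2" "(a2, Suc i) \<in> E2"
  shows "norm (\<psi>1 (t, j) - \<psi>2 (a2, i)) < \<eta>"
proof -
  obtain a3 where a3: "a3 \<le> a2" "(a3, i) \<in> E2" "i = 0 \<Longrightarrow> a3 = 0"
    "\<And>k. i = Suc k \<Longrightarrow> (a3, k) \<in> E2 \<and> (a3, Suc k) \<in> E2"
    by (rule hybrid_time_domain_entry[OF solution_domain[OF s2] a2(3)]) (rule that)
  show ?thesis
  proof (cases "a3 = a2")
    case True
    then show ?thesis using pre_jump_state_close_at_jump[OF tj tT p a2(1,3,4)] a3 by simp
  next
    case False
    then show ?thesis using pre_jump_state_close_after_flow[OF tj tT p a2, of a3] a3(1,2) by simp
  qed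
qed

lemma graph_close_at:
  assumes tj: "(t, j) \<in> E1" and tT: "T0 + \<sigma> \<le> t \<or> T0 = 0"
  shows "\<exists>(t', j')\<in>E2. \<bar>t - t'\<bar> < \<eta> \<and> norm (\<psi>1 (t, j) - \<psi>2 (t', j')) < \<eta>"
proof -
  have "T0 \<le> t" using tT \<sigma>_pos hybrid_time_domain_nonneg[OF solution_domain[OF s1] tj] by auto
  then obtain j' where j': "(t, j') \<in> E2" "rhoA C D G (\<psi>1 (t, j)) (\<psi>2 (t, j')) < \<epsilon>w"
    using close12 tj unfolding rho_close_def by blast
  define x y where "x = \<psi>1 (t, j)" and "y = \<psi>2 (t, j')"
  obtain p q where pq: "(p, q) \<in> setA C D G" "dist x p < \<epsilon>w" "dist y q < \<epsilon>w"
    using rhoA_witness[OF j'(2) setA_nonempty[OF s1]] unfolding x_def y_def by blast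
  consider "p = q" | "q \<in> D" "p = g q" | "p \<in> D" "q = g p"
    using pq(1) G_eq unfolding setA_def by auto
  then show ?thesis
  proof cases
    case 1
    then have "dist x y < 2 * \<epsilon>w" using dist_triangle[of x y p] pq(2,3) by (simp add: dist_commute)
    then have "norm (x - y) < \<eta>" using budget_\<eta> \<epsilon>w_pos lsp_nonneg by (simp add: dist_norm)
    then show ?thesis using j'(1) \<sigma>_pos \<sigma>_le unfolding x_def y_def by force
  next
    case 2
    then have "q \<in> Q" using near_jump_point_in_Q[OF tj j'(1)] pq(2,3) unfolding x_def y_def by blast
    then obtain \<tau> where \<tau>: "t \<le> \<tau>" "\<tau> < t + \<sigma>" "(\<tau>, Suc j') \<in> E2" "dist (\<psi>2 (\<tau>, Suc j')) (g q) < \<eta> / 4"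
      using solution_near_Q_jumps_soon[OF s2 tc2 j'(1)] pq(3) unfolding y_def by blast
    have "dist x (g q) < \<epsilon>w" "dist (g q) (\<psi>2 (\<tau>, Suc j')) < \<eta> / 4"
      using pq(2) 2(2) \<tau>(4) by (simp_all add: dist_commute)
    then have "dist x (\<psi>2 (\<tau>, Suc j')) < \<eta>"
      using dist_triangle[of x "\<psi>2 (\<tau>, Suc j')" "g q"] budget_\<eta> \<epsilon>w_pos lsp_nonneg by linarith
    then have "norm (x - \<psi>2 (\<tau>, Suc j')) < \<eta>" by (simp add: dist_norm)
    moreover have "\<bar>t - \<tau>\<bar> < \<eta>" using \<tau>(1,2) \<sigma>_le by simp
    ultimately show ?thesis using \<tau>(3) unfolding x_def by force
  next
    case 3
    then have "p \<in> Q" using near_jump_point_in_Q[OF tj j'(1)] pq(2,3) unfolding x_def y_def by blast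
    then have "p \<in> Q'" using Q_sub_Q' by blast
    obtain a2 where a2: "t - \<sigma> < a2" "a2 \<le> t" "(a2, j') \<in> E2" "j' = 0 \<Longrightarrow> a2 = 0"
      "\<And>k. j' = Suc k \<Longrightarrow> (a2, k) \<in> E2 \<and> (a2, Suc k) \<in> E2"
      using solution_near_jump_image_entered_recently[OF s2 j'(1) \<open>p \<in> Q'\<close>] pq(3) 3(2)
      unfolding y_def by blast
    show ?thesis
    proof (cases j')
      case 0
      then show ?thesis
        using initial_jump_impossible[OF tj _ _ tT \<open>p \<in> Q'\<close>] j'(1) a2(1,4) pq(2,3) 3(2)
        unfolding x_def y_def by simp
    next
      case (Suc i)
      then have "norm (x - \<psi>2 (a2, i)) < \<eta>"
        using pre_jump_state_close[OF tj tT \<open>p \<in> Q\<close>, of a2 i] a2 pq(2) unfolding x_def by blast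
      moreover have "\<bar>t - a2\<bar> < \<eta>" using a2(1,2) \<sigma>_le by simp
      ultimately show ?thesis using a2(5)[OF Suc] unfolding x_def by force
    qed
  qed
qed

lemma graph_close_from_rho_close:
  shows "graph_close E1 \<psi>1 E2 \<psi>2 (T0 + \<sigma>) \<eta>" and "T0 = 0 \<Longrightarrow> graph_close E1 \<psi>1 E2 \<psi>2 0 \<eta>"
  using graph_close_at unfolding graph_close_def by auto

end

end

context transversal_system
begin

lemma near_jump_points_compact_cover:
  assumes "bounded D \<or> bounded_arc E \<psi>"
  obtains Q where "compact Q" "Q \<subseteq> D" "near_jump_points D g E \<psi> \<subseteq> Q"
proof (cases "bounded D")
  case True
  then show ?thesis using that[of D] closed_D by (auto simp: compact_eq_bounded_closed near_jump_points_def)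
next
  case False
  then obtain R where R: "\<And>p. p \<in> E \<Longrightarrow> norm (\<psi> p) \<le> R" using assms unfolding bounded_arc_def by blast
  define B where "B = cball (0::'a) (R + 1)"
  have near: "v \<in> B" if "p \<in> E" "dist (\<psi> p) v < 1" for p v
    using R[OF that(1)] that(2) norm_triangle_ineq2[of v "\<psi> p"] by (simp add: B_def dist_norm norm_minus_commute)
  have "{d \<in> D. g d \<in> B} = {x\<in>D. G x \<inter> B \<noteq> {}}" using G_eq by auto
  then have "compact {d \<in> D. g d \<in> B}" using proper_G by (simp add: B_def)
  then have "compact ((D \<inter> B) \<union> {d \<in> D. g d \<in> B})"
    by (intro compact_Un closed_Int_compact closed_D) (simp add: B_def)
  moreover have "near_jump_points D g E \<psi> \<subseteq> (D \<inter> B) \<union> {d \<in> D. g d \<in> B}"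
    using near unfolding near_jump_points_def by blast
  ultimately show ?thesis using that by blast
qed

lemma jump_separation:
  assumes "compact K" "K \<subseteq> D"
  obtains d where "d > 0" "\<And>a b. a \<in> K \<Longrightarrow> b \<in> D \<Longrightarrow> d \<le> dist a (g b)"
    "\<And>a b. a \<in> K \<Longrightarrow> b \<in> D \<Longrightarrow> d \<le> dist (g a) b"
proof -
  have "compact (g ` K)" using compact_continuous_image continuous_on_subset[OF continuous_on_g] assms by blast
  moreover have "K \<inter> g ` D = {}" "g ` K \<inter> D = {}" using assms(2) jump_leaves_D by blast+
  ultimately obtain d1 d2 where "d1 > 0" "\<And>a b. a \<in> K \<Longrightarrow> b \<in> g ` D \<Longrightarrow> d1 \<le> dist a b"
    "d2 > 0" "\<And>a b. a \<in> g ` K \<Longrightarrow> b \<in> D \<Longrightarrow> d2 \<le> dist a b"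
    using separate_compact_closed[OF assms(1) closed_jump_image] separate_compact_closed[OF _ closed_D]
    by metis
  then show ?thesis using that[of "min d1 d2"] by force
qed

lemma jump_map_uniformly_continuous:
  assumes "compact K" "K \<subseteq> D" "e > 0"
  obtains \<delta> where "\<delta> > 0" "\<And>a b. a \<in> K \<Longrightarrow> b \<in> K \<Longrightarrow> dist a b < \<delta> \<Longrightarrow> dist (g a) (g b) < e"
proof -
  have "uniformly_continuous_on K g"
    using compact_uniformly_continuous continuous_on_subset[OF continuous_on_g] assms(1,2) by blast
  then obtain \<delta> where "\<delta> > 0" "\<forall>x\<in>K. \<forall>x'\<in>K. dist x' x < \<delta> \<longrightarrow> dist (g x') (g x) < e"
    using assms(3) unfolding uniformly_continuous_on_def by blast
  then show ?thesis using that[of \<delta>] by (metis dist_commute)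
qed

lemma flow_displacement_near:
  assumes "compact K"
  obtains M r where "M > 0" "r > 0"
    "\<And>\<gamma> h. mean_value_arc C F \<gamma> h \<Longrightarrow> h \<le> r \<Longrightarrow> \<gamma> 0 \<in> C \<Longrightarrow> (\<exists>k\<in>K. dist (\<gamma> 0) k < 1) \<Longrightarrow>
       norm (\<gamma> h - \<gamma> 0) \<le> M * h"
    "\<And>\<gamma> h. mean_value_arc C (\<lambda>x. uminus ` F x) \<gamma> h \<Longrightarrow> h \<le> r \<Longrightarrow> \<gamma> 0 \<in> C \<Longrightarrow>
       (\<exists>k\<in>K. dist (\<gamma> 0) k < 1) \<Longrightarrow> norm (\<gamma> h - \<gamma> 0) \<le> M * h"
proof -
  obtain MF rF where MF: "MF > 0" "rF > 0" and F: "\<And>\<gamma> h. mean_value_arc C F \<gamma> h \<Longrightarrow> h \<le> rF \<Longrightarrow>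
      \<gamma> 0 \<in> C \<Longrightarrow> (\<exists>k\<in>K. dist (\<gamma> 0) k < 1) \<Longrightarrow> norm (\<gamma> h - \<gamma> 0) \<le> MF * h"
    using locally_bounded_mean_value_arc_displacement[OF lb_F closed_C assms] by blast
  obtain MB rB where MB: "MB > 0" "rB > 0" and B: "\<And>\<gamma> h. mean_value_arc C (\<lambda>x. uminus ` F x) \<gamma> h \<Longrightarrow>
      h \<le> rB \<Longrightarrow> \<gamma> 0 \<in> C \<Longrightarrow> (\<exists>k\<in>K. dist (\<gamma> 0) k < 1) \<Longrightarrow> norm (\<gamma> h - \<gamma> 0) \<le> MB * h"
    using locally_bounded_mean_value_arc_displacement[OF lb_uminus_F closed_C assms] by blast
  have larger: "M' * h \<le> max MF MB * h" if "M' \<le> max MF MB" "mean_value_arc C F' \<gamma> h" for M' F' \<gamma> h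
    using that mean_value_arcD(1)[OF that(2)] by (intro mult_right_mono) auto
  show ?thesis
  proof (rule that[of "max MF MB" "min rF rB"])
    fix \<gamma> h assume "mean_value_arc C F \<gamma> h" "h \<le> min rF rB" "\<gamma> 0 \<in> C" "\<exists>k\<in>K. dist (\<gamma> 0) k < 1"
    then show "norm (\<gamma> h - \<gamma> 0) \<le> max MF MB * h"
      using F[of \<gamma> h] larger[of MF] by (meson max.cobounded1 min.boundedE order_trans)
  next
    fix \<gamma> h assume "mean_value_arc C (\<lambda>x. uminus ` F x) \<gamma> h" "h \<le> min rF rB" "\<gamma> 0 \<in> C"
      "\<exists>k\<in>K. dist (\<gamma> 0) k < 1"
    then show "norm (\<gamma> h - \<gamma> 0) \<le> max MF MB * h"
      using B[of \<gamma> h] larger[of MB] by (meson max.cobounded2 min.boundedE order_trans)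
  qed (use MF MB in auto)
qed

lemma no_flow_near_jumps:
  assumes "compact K" "K \<subseteq> D"
  obtains r where "r > 0" "\<And>\<gamma> k. mean_value_arc C F \<gamma> \<sigma> \<Longrightarrow> k \<in> K \<Longrightarrow> r \<le> dist (\<gamma> 0) k"
    "\<And>\<gamma> k. mean_value_arc C (\<lambda>x. uminus ` F x) \<gamma> \<sigma> \<Longrightarrow> k \<in> g ` K \<Longrightarrow> r \<le> dist (\<gamma> 0) k"
proof -
  have "compact (g ` K)" using compact_continuous_image continuous_on_subset[OF continuous_on_g] assms by blast
  have "\<And>x. x \<in> K \<Longrightarrow> x \<in> C \<Longrightarrow> F x \<inter> tangent_cone C x = {}" using transversal_D assms(2) by blast
  then obtain rf where "rf > 0" "\<And>\<gamma> k. mean_value_arc C F \<gamma> \<sigma> \<Longrightarrow> k \<in> K \<Longrightarrow> rf \<le> dist (\<gamma> 0) k"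
    using mean_value_arc_start_far[OF closed_C osc_F lb_F convex_F assms(1), of \<sigma>] by blast
  moreover have "\<And>x. x \<in> g ` K \<Longrightarrow> x \<in> C \<Longrightarrow> uminus ` F x \<inter> tangent_cone C x = {}"
    using transversal_jump_image assms(2) by blast
  then obtain rb where "rb > 0"
    "\<And>\<gamma> k. mean_value_arc C (\<lambda>x. uminus ` F x) \<gamma> \<sigma> \<Longrightarrow> k \<in> g ` K \<Longrightarrow> rb \<le> dist (\<gamma> 0) k"
    using mean_value_arc_start_far[OF closed_C osc_uminus_F lb_uminus_F convex_uminus_F
        \<open>compact (g ` K)\<close>, of \<sigma>] by blast
  ultimately show ?thesis using that[of "min rf rb"] by force
qed

lemma comparison_constants_exist:
  assumes Q: "compact Q" "Q \<subseteq> D" and \<eta>: "\<eta> > 0"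
  obtains Q' \<epsilon>w \<sigma> lsp sep \<delta>g where "comparison_constants C D F G g Q Q' \<eta> \<epsilon>w \<sigma> lsp sep \<delta>g"
proof -
  define Q' where "Q' = D \<inter> (\<Union>q\<in>Q. cball q 1)"
  have Q': "compact Q'" "Q' \<subseteq> D" "Q \<subseteq> Q'"
    using closed_Int_compact[OF closed_D compact_UN_cball[OF Q(1)]] Q(2) by (auto simp: Q'_def)
  have Q'_nbhd: "\<And>d q. d \<in> D \<Longrightarrow> q \<in> Q \<Longrightarrow> dist d q < 1 \<Longrightarrow> d \<in> Q'"
    by (force simp: Q'_def dist_commute)
  have "compact (g ` Q')" using compact_continuous_image continuous_on_subset[OF continuous_on_g] Q' by blast
  then obtain M r where M: "M > 0" "r > 0" and disp:
    "\<And>\<gamma> h. mean_value_arc C F \<gamma> h \<Longrightarrow> h \<le> r \<Longrightarrow> \<gamma> 0 \<in> C \<Longrightarrow> (\<exists>k\<in>Q' \<union> g ` Q'. dist (\<gamma> 0) k < 1) \<Longrightarrow>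
       norm (\<gamma> h - \<gamma> 0) \<le> M * h"
    "\<And>\<gamma> h. mean_value_arc C (\<lambda>x. uminus ` F x) \<gamma> h \<Longrightarrow> h \<le> r \<Longrightarrow> \<gamma> 0 \<in> C \<Longrightarrow>
       (\<exists>k\<in>Q' \<union> g ` Q'. dist (\<gamma> 0) k < 1) \<Longrightarrow> norm (\<gamma> h - \<gamma> 0) \<le> M * h"
    using flow_displacement_near[of "Q' \<union> g ` Q'"] Q'(1) by blast
  obtain d where d: "d > 0" "\<And>a b. a \<in> Q' \<Longrightarrow> b \<in> D \<Longrightarrow> d \<le> dist a (g b)"
    "\<And>a b. a \<in> Q' \<Longrightarrow> b \<in> D \<Longrightarrow> d \<le> dist (g a) b"
    using jump_separation[OF Q'(1,2)] by blast
  obtain \<delta>g where \<delta>g: "\<delta>g > 0" "\<And>a b. a \<in> Q' \<Longrightarrow> b \<in> Q' \<Longrightarrow> dist a b < \<delta>g \<Longrightarrow> dist (g a) (g b) < \<eta> / 4"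
    using jump_map_uniformly_continuous[OF Q'(1,2), of "\<eta> / 4"] \<eta> by auto
  \<comment> \<open>All error terms are made small against \<open>\<kappa>\<close>; \<open>\<sigma>\<close> is chosen first, then \<open>\<epsilon>w\<close> depending on \<open>\<sigma>\<close>.\<close>
  define \<kappa> where "\<kappa> = min d (min \<delta>g (min \<eta> 1))"
  have \<kappa>: "\<kappa> > 0" "\<kappa> \<le> d" "\<kappa> \<le> \<delta>g" "\<kappa> \<le> \<eta>" "\<kappa> \<le> 1" using d \<delta>g \<eta> by (auto simp: \<kappa>_def)
  define \<sigma> where "\<sigma> = min (\<eta> / 2) (min r (\<kappa> / (8 * M)))"
  have \<sigma>: "\<sigma> > 0" "\<sigma> \<le> \<eta>" "\<sigma> \<le> r" using \<eta> M \<kappa> by (auto simp: \<sigma>_def)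
  have "M * \<sigma> \<le> M * (\<kappa> / (8 * M))" using M by (intro mult_left_mono) (auto simp: \<sigma>_def)
  then have M\<sigma>: "M * \<sigma> \<le> \<kappa> / 8" using M by simp
  obtain \<rho> where \<rho>: "\<rho> > 0" "\<And>\<gamma> k. mean_value_arc C F \<gamma> \<sigma> \<Longrightarrow> k \<in> Q' \<Longrightarrow> \<rho> \<le> dist (\<gamma> 0) k"
    "\<And>\<gamma> k. mean_value_arc C (\<lambda>x. uminus ` F x) \<gamma> \<sigma> \<Longrightarrow> k \<in> g ` Q' \<Longrightarrow> \<rho> \<le> dist (\<gamma> 0) k"
    using no_flow_near_jumps[OF Q'(1,2)] by blast
  define \<epsilon>w where "\<epsilon>w = min (\<rho> / 2) (\<kappa> / 16)"
  have \<epsilon>w: "\<epsilon>w > 0" "2 * \<epsilon>w \<le> \<rho>" "\<epsilon>w \<le> \<kappa> / 16" using \<rho> \<kappa> by (auto simp: \<epsilon>w_def)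
  have short: "M * h \<le> M * \<sigma>" if "h \<le> \<sigma>" for h using that M by (intro mult_left_mono) auto
  have "comparison_constants C D F G g Q Q' \<eta> \<epsilon>w \<sigma> (M * \<sigma>) d \<delta>g"
  proof (intro comparison_constants.intro transversal_system_axioms comparison_constants_axioms.intro)
    show "\<And>\<gamma> k. mean_value_arc C F \<gamma> \<sigma> \<Longrightarrow> k \<in> Q \<Longrightarrow> 2 * \<epsilon>w \<le> dist (\<gamma> 0) k"
      using \<rho>(2) Q'(3) \<epsilon>w(2) by (meson order_trans subsetD)
    show "\<And>\<gamma> k. mean_value_arc C (\<lambda>x. uminus ` F x) \<gamma> \<sigma> \<Longrightarrow> k \<in> g ` Q' \<Longrightarrow> 2 * \<epsilon>w \<le> dist (\<gamma> 0) k"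
      using \<rho>(3) \<epsilon>w(2) by (meson order_trans)
    show "\<And>\<gamma> h. mean_value_arc C F \<gamma> h \<Longrightarrow> h \<le> \<sigma> \<Longrightarrow> \<gamma> 0 \<in> C \<Longrightarrow>
        (\<exists>k\<in>Q' \<union> g ` Q'. dist (\<gamma> 0) k < 1) \<Longrightarrow> norm (\<gamma> h - \<gamma> 0) \<le> M * \<sigma>"
      using disp(1) short \<sigma>(3) by (meson order_trans)
    show "\<And>\<gamma> h. mean_value_arc C (\<lambda>x. uminus ` F x) \<gamma> h \<Longrightarrow> h \<le> \<sigma> \<Longrightarrow> \<gamma> 0 \<in> C \<Longrightarrow>
        (\<exists>k\<in>Q' \<union> g ` Q'. dist (\<gamma> 0) k < 1) \<Longrightarrow> norm (\<gamma> h - \<gamma> 0) \<le> M * \<sigma>"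
      using disp(2) short \<sigma>(3) by (meson order_trans)
    show "M * \<sigma> + \<epsilon>w < \<delta>g" "4 * \<epsilon>w + M * \<sigma> < \<eta>" "3 * \<epsilon>w + 2 * (M * \<sigma>) < d"
      "3 * \<epsilon>w + M * \<sigma> < 1"
      using M\<sigma> \<epsilon>w(1,3) \<kappa> by linarith+
    show "0 \<le> M * \<sigma>" using M \<sigma> by simp
  qed (fact Q'(2,3) Q'_nbhd d(2,3) \<delta>g(2) \<epsilon>w(1) \<sigma>(1,2))+
  then show ?thesis using that by blast
qed

lemma rho_close_imp_graph_close:
  assumes Q: "compact Q" "Q \<subseteq> D" and \<epsilon>: "\<epsilon> > 0"
  obtains \<epsilon>w \<sigma> where "\<epsilon>w > 0" "\<sigma> > 0"
    "\<And>E1 \<psi>1 E2 \<psi>2 T0. is_solution C F D G E1 \<psi>1 \<Longrightarrow> is_solution C F D G E2 \<psi>2 \<Longrightarrow> t_complete E2 \<Longrightarrow>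
       near_jump_points D g E1 \<psi>1 \<subseteq> Q \<or> near_jump_points D g E2 \<psi>2 \<subseteq> Q \<Longrightarrow> 0 < T0 \<Longrightarrow>
       rho_close C D G E1 \<psi>1 E2 \<psi>2 T0 \<epsilon>w \<Longrightarrow> rho_close C D G E2 \<psi>2 E1 \<psi>1 T0 \<epsilon>w \<Longrightarrow>
       graph_close E1 \<psi>1 E2 \<psi>2 (T0 + \<sigma>) \<epsilon>"
    "\<And>E1 \<psi>1 E2 \<psi>2. is_solution C F D G E1 \<psi>1 \<Longrightarrow> is_solution C F D G E2 \<psi>2 \<Longrightarrow> t_complete E2 \<Longrightarrow>
       near_jump_points D g E1 \<psi>1 \<subseteq> Q \<or> near_jump_points D g E2 \<psi>2 \<subseteq> Q \<Longrightarrow>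
       rho_close C D G E1 \<psi>1 E2 \<psi>2 0 \<epsilon>w \<Longrightarrow> rho_close C D G E2 \<psi>2 E1 \<psi>1 0 \<epsilon>w \<Longrightarrow>
       norm (\<psi>1 (0, 0) - \<psi>2 (0, 0)) < \<epsilon>w \<Longrightarrow> graph_close E1 \<psi>1 E2 \<psi>2 0 \<epsilon>"
proof -
  obtain Q' \<epsilon>w \<sigma> lsp sep \<delta>g where "comparison_constants C D F G g Q Q' \<epsilon> \<epsilon>w \<sigma> lsp sep \<delta>g"
    using comparison_constants_exist[OF Q \<epsilon>] by blast
  then interpret comparison_constants C D F G g Q Q' \<epsilon> \<epsilon>w \<sigma> lsp sep \<delta>g .
  show ?thesis
  proof (rule that[OF \<epsilon>w_pos \<sigma>_pos])
    fix E1 \<psi>1 E2 \<psi>2 T0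
    assume "is_solution C F D G E1 \<psi>1" "is_solution C F D G E2 \<psi>2" "t_complete E2"
      "near_jump_points D g E1 \<psi>1 \<subseteq> Q \<or> near_jump_points D g E2 \<psi>2 \<subseteq> Q" "0 < T0"
      "rho_close C D G E1 \<psi>1 E2 \<psi>2 T0 \<epsilon>w" "rho_close C D G E2 \<psi>2 E1 \<psi>1 T0 \<epsilon>w"
    then show "graph_close E1 \<psi>1 E2 \<psi>2 (T0 + \<sigma>) \<epsilon>"
      using graph_close_from_rho_close(1)[of E1 \<psi>1 E2 \<psi>2 T0] by simp
  next
    fix E1 \<psi>1 E2 \<psi>2
    assume "is_solution C F D G E1 \<psi>1" "is_solution C F D G E2 \<psi>2" "t_complete E2"
      "near_jump_points D g E1 \<psi>1 \<subseteq> Q \<or> near_jump_points D g E2 \<psi>2 \<subseteq> Q"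
      "rho_close C D G E1 \<psi>1 E2 \<psi>2 0 \<epsilon>w" "rho_close C D G E2 \<psi>2 E1 \<psi>1 0 \<epsilon>w"
      "norm (\<psi>1 (0, 0) - \<psi>2 (0, 0)) < \<epsilon>w"
    then show "graph_close E1 \<psi>1 E2 \<psi>2 0 \<epsilon>"
      using graph_close_from_rho_close(2)[of E1 \<psi>1 E2 \<psi>2 0] by simp
  qed
qed

end

lemma t_complete_if_rho_close:
  assumes "t_complete E1" "rho_close C D G E1 \<psi>1 E2 \<psi>2 T \<epsilon>"
  shows "t_complete E2"
  unfolding t_complete_def
proof
  fix T'
  obtain t j where "(t, j) \<in> E1" "max T T' \<le> t" using assms(1) unfolding t_complete_def by fast
  then show "\<exists>(t, j)\<in>E2. T' \<le> t" using assms(2) unfolding rho_close_def by fastforce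
qed

lemma stable_rhoD:
  assumes "stable_rho C F D G Es \<phi>s" "\<epsilon> > 0"
  obtains \<delta> where "\<delta> > 0" "\<And>E \<phi>. is_maximal_solution C F D G E \<phi> \<Longrightarrow> rhoA C D G (\<phi>s (0, 0)) (\<phi> (0, 0)) < \<delta> \<Longrightarrow>
      rho_close C D G Es \<phi>s E \<phi> 0 \<epsilon> \<and> rho_close C D G E \<phi> Es \<phi>s 0 \<epsilon>"
proof -
  obtain \<delta> where "\<delta> > 0" and close: "\<forall>E \<phi>. is_maximal_solution C F D G E \<phi> \<and>
         rhoA C D G (\<phi>s (0, 0)) (\<phi> (0, 0)) < \<delta> \<longrightarrow>
         (\<forall>(t, j)\<in>Es. \<exists>j'. (t, j') \<in> E \<and> rhoA C D G (\<phi>s (t, j)) (\<phi> (t, j')) < \<epsilon>) \<and>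
         (\<forall>(t, j')\<in>E. \<exists>j. (t, j) \<in> Es \<and> rhoA C D G (\<phi>s (t, j)) (\<phi> (t, j')) < \<epsilon>)"
    using assms unfolding stable_rho_def by blast
  show ?thesis
  proof (rule that[OF \<open>\<delta> > 0\<close>])
    fix E \<phi> assume "is_maximal_solution C F D G E \<phi>" "rhoA C D G (\<phi>s (0, 0)) (\<phi> (0, 0)) < \<delta>"
    then have "\<forall>(t, j)\<in>Es. \<exists>j'. (t, j') \<in> E \<and> rhoA C D G (\<phi>s (t, j)) (\<phi> (t, j')) < \<epsilon>"
      "\<forall>(t, j')\<in>E. \<exists>j. (t, j) \<in> Es \<and> rhoA C D G (\<phi>s (t, j)) (\<phi> (t, j')) < \<epsilon>"
      using close by blast+
    then show "rho_close C D G Es \<phi>s E \<phi> 0 \<epsilon> \<and> rho_close C D G E \<phi> Es \<phi>s 0 \<epsilon>"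
      unfolding rho_close_def by (auto simp: rhoA_commute[of C D G "\<phi> _"])
  qed
qed

lemma asymptotically_stable_rhoD:
  assumes "asymptotically_stable_rho C F D G Es \<phi>s"
  obtains r where "r > 0" "\<And>\<epsilon> E \<phi>. \<epsilon> > 0 \<Longrightarrow> is_maximal_solution C F D G E \<phi> \<Longrightarrow>
      rhoA C D G (\<phi>s (0, 0)) (\<phi> (0, 0)) < r \<Longrightarrow>
      \<exists>T\<ge>0. rho_close C D G Es \<phi>s E \<phi> T \<epsilon> \<and> rho_close C D G E \<phi> Es \<phi>s T \<epsilon>"
proof -
  obtain r where "r > 0" and close: "\<forall>\<epsilon>>0. \<forall>E \<phi>. is_maximal_solution C F D G E \<phi> \<and>
         rhoA C D G (\<phi>s (0, 0)) (\<phi> (0, 0)) < r \<longrightarrow>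
         (\<exists>T\<ge>0.
           (\<forall>(t, j)\<in>Es. t \<ge> T \<longrightarrow> (\<exists>j'. (t, j') \<in> E \<and> rhoA C D G (\<phi>s (t, j)) (\<phi> (t, j')) < \<epsilon>)) \<and>
           (\<forall>(t, j')\<in>E. t \<ge> T \<longrightarrow> (\<exists>j. (t, j) \<in> Es \<and> rhoA C D G (\<phi>s (t, j)) (\<phi> (t, j')) < \<epsilon>)))"
    using assms unfolding asymptotically_stable_rho_def by blast
  show ?thesis
  proof (rule that[OF \<open>r > 0\<close>])
    fix \<epsilon> :: real and E \<phi>
    assume "\<epsilon> > 0" "is_maximal_solution C F D G E \<phi>" "rhoA C D G (\<phi>s (0, 0)) (\<phi> (0, 0)) < r"
    then obtain T where "T \<ge> 0"
      "\<forall>(t, j)\<in>Es. t \<ge> T \<longrightarrow> (\<exists>j'. (t, j') \<in> E \<and> rhoA C D G (\<phi>s (t, j)) (\<phi> (t, j')) < \<epsilon>)"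
      "\<forall>(t, j')\<in>E. t \<ge> T \<longrightarrow> (\<exists>j. (t, j) \<in> Es \<and> rhoA C D G (\<phi>s (t, j)) (\<phi> (t, j')) < \<epsilon>)"
      using close by blast
    then show "\<exists>T\<ge>0. rho_close C D G Es \<phi>s E \<phi> T \<epsilon> \<and> rho_close C D G E \<phi> Es \<phi>s T \<epsilon>"
      unfolding rho_close_def by (auto simp: rhoA_commute[of C D G "\<phi> _"])
  qed
qed

lemma graph_close_commute:
  assumes "graph_close E \<phi> Es \<phi>s T \<epsilon>"
  shows "\<forall>(t', j')\<in>E. T \<le> t' \<longrightarrow> (\<exists>(t, j)\<in>Es. \<bar>t - t'\<bar> < \<epsilon> \<and> norm (\<phi>s (t, j) - \<phi> (t', j')) < \<epsilon>)"
  using assms unfolding graph_close_def by (fastforce simp: abs_minus_commute norm_minus_commute)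

lemma stable_graphicalI:
  assumes sol: "is_solution C F D G Es \<phi>s"
    and close: "\<And>\<epsilon>. \<epsilon> > 0 \<Longrightarrow> \<exists>\<delta>>0. \<forall>E \<phi>. is_maximal_solution C F D G E \<phi> \<longrightarrow>
      norm (\<phi>s (0, 0) - \<phi> (0, 0)) < \<delta> \<longrightarrow> graph_close Es \<phi>s E \<phi> 0 \<epsilon> \<and> graph_close E \<phi> Es \<phi>s 0 \<epsilon>"
  shows "stable_graphical C F D G Es \<phi>s"
  unfolding stable_graphical_def
proof (intro allI impI)
  fix \<epsilon> :: real assume "\<epsilon> > 0"
  then obtain \<delta> where "\<delta> > 0" and \<delta>: "\<forall>E \<phi>. is_maximal_solution C F D G E \<phi> \<longrightarrow>
      norm (\<phi>s (0, 0) - \<phi> (0, 0)) < \<delta> \<longrightarrow> graph_close Es \<phi>s E \<phi> 0 \<epsilon> \<and> graph_close E \<phi> Es \<phi>s 0 \<epsilon>"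
    using close[of \<epsilon>] by blast
  show "\<exists>\<delta>>0. \<forall>E \<phi>. is_maximal_solution C F D G E \<phi> \<and> norm (\<phi>s (0, 0) - \<phi> (0, 0)) < \<delta> \<longrightarrow>
         (\<forall>(t, j)\<in>Es. \<exists>(t', j')\<in>E. \<bar>t - t'\<bar> < \<epsilon> \<and> norm (\<phi>s (t, j) - \<phi> (t', j')) < \<epsilon>) \<and>
         (\<forall>(t', j')\<in>E. \<exists>(t, j)\<in>Es. \<bar>t - t'\<bar> < \<epsilon> \<and> norm (\<phi>s (t, j) - \<phi> (t', j')) < \<epsilon>)"
  proof (intro exI[of _ \<delta>] conjI allI impI \<open>\<delta> > 0\<close>)
    fix E \<phi> assume a: "is_maximal_solution C F D G E \<phi> \<and> norm (\<phi>s (0, 0) - \<phi> (0, 0)) < \<delta>"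
    then have "is_solution C F D G E \<phi>" unfolding is_maximal_solution_def by blast
    have close_Es: "graph_close Es \<phi>s E \<phi> 0 \<epsilon>" and close_E: "graph_close E \<phi> Es \<phi>s 0 \<epsilon>"
      using \<delta>[rule_format, of E \<phi>] a by blast+
    show "\<forall>(t, j)\<in>Es. \<exists>(t', j')\<in>E. \<bar>t - t'\<bar> < \<epsilon> \<and> norm (\<phi>s (t, j) - \<phi> (t', j')) < \<epsilon>"
      using close_Es hybrid_time_domain_nonneg[OF solution_domain[OF sol]]
      unfolding graph_close_def by blast
    show "\<forall>(t', j')\<in>E. \<exists>(t, j)\<in>Es. \<bar>t - t'\<bar> < \<epsilon> \<and> norm (\<phi>s (t, j) - \<phi> (t', j')) < \<epsilon>"
      using graph_close_commute[OF close_E]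
        hybrid_time_domain_nonneg[OF solution_domain[OF \<open>is_solution C F D G E \<phi>\<close>]] by blast
  qed
qed

lemma asymptotically_stable_graphicalI:
  assumes "stable_graphical C F D G Es \<phi>s" and "r > 0"
    and close: "\<And>\<epsilon> E \<phi>. \<epsilon> > 0 \<Longrightarrow> is_maximal_solution C F D G E \<phi> \<Longrightarrow> norm (\<phi>s (0, 0) - \<phi> (0, 0)) < r \<Longrightarrow>
      \<exists>T\<ge>0. graph_close Es \<phi>s E \<phi> T \<epsilon> \<and> graph_close E \<phi> Es \<phi>s T \<epsilon>"
  shows "asymptotically_stable_graphical C F D G Es \<phi>s"
  unfolding asymptotically_stable_graphical_def
proof (rule conjI[OF assms(1)], rule exI[of _ r], intro conjI assms(2) allI impI)
  fix \<epsilon> :: real and E \<phi>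
  assume "\<epsilon> > 0" "is_maximal_solution C F D G E \<phi> \<and> norm (\<phi>s (0, 0) - \<phi> (0, 0)) < r"
  then obtain T where T: "T \<ge> 0" "graph_close Es \<phi>s E \<phi> T \<epsilon>" "graph_close E \<phi> Es \<phi>s T \<epsilon>"
    using close[of \<epsilon> E \<phi>] by blast
  have "\<forall>(t, j)\<in>Es. t \<ge> T \<longrightarrow> (\<exists>(t', j')\<in>E. \<bar>t - t'\<bar> < \<epsilon> \<and> norm (\<phi>s (t, j) - \<phi> (t', j')) < \<epsilon>)"
    using T(2) unfolding graph_close_def by blast
  moreover have "\<forall>(t', j')\<in>E. t' \<ge> T \<longrightarrow> (\<exists>(t, j)\<in>Es. \<bar>t - t'\<bar> < \<epsilon> \<and> norm (\<phi>s (t, j) - \<phi> (t', j')) < \<epsilon>)"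
    using graph_close_commute[OF T(3)] by blast
  ultimately show "\<exists>T\<ge>0.
      (\<forall>(t, j)\<in>Es. t \<ge> T \<longrightarrow> (\<exists>(t', j')\<in>E. \<bar>t - t'\<bar> < \<epsilon> \<and> norm (\<phi>s (t, j) - \<phi> (t', j')) < \<epsilon>)) \<and>
      (\<forall>(t', j')\<in>E. t' \<ge> T \<longrightarrow> (\<exists>(t, j)\<in>Es. \<bar>t - t'\<bar> < \<epsilon> \<and> norm (\<phi>s (t, j) - \<phi> (t', j')) < \<epsilon>))"
    using T(1) by blast
qed

context transversal_system
begin

lemma stable_graphical_if_stable_rho:
  assumes sol: "is_solution C F D G Es \<phi>s" and tc: "t_complete Es"
    and Q: "compact Q" "Q \<subseteq> D" "near_jump_points D g Es \<phi>s \<subseteq> Q"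
    and stable: "stable_rho C F D G Es \<phi>s"
  shows "stable_graphical C F D G Es \<phi>s"
proof (rule stable_graphicalI[OF sol])
  fix \<epsilon> :: real assume "\<epsilon> > 0"
  obtain \<epsilon>w \<sigma> where "\<epsilon>w > 0" "\<sigma> > 0" and "\<And>E1 \<psi>1 E2 \<psi>2 T0. is_solution C F D G E1 \<psi>1 \<Longrightarrow>
        is_solution C F D G E2 \<psi>2 \<Longrightarrow> t_complete E2 \<Longrightarrow>
        near_jump_points D g E1 \<psi>1 \<subseteq> Q \<or> near_jump_points D g E2 \<psi>2 \<subseteq> Q \<Longrightarrow> 0 < T0 \<Longrightarrow>
        rho_close C D G E1 \<psi>1 E2 \<psi>2 T0 \<epsilon>w \<Longrightarrow> rho_close C D G E2 \<psi>2 E1 \<psi>1 T0 \<epsilon>w \<Longrightarrow>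
        graph_close E1 \<psi>1 E2 \<psi>2 (T0 + \<sigma>) \<epsilon>"
    and from_start: "\<And>E1 \<psi>1 E2 \<psi>2. is_solution C F D G E1 \<psi>1 \<Longrightarrow>
      is_solution C F D G E2 \<psi>2 \<Longrightarrow> t_complete E2 \<Longrightarrow>
      near_jump_points D g E1 \<psi>1 \<subseteq> Q \<or> near_jump_points D g E2 \<psi>2 \<subseteq> Q \<Longrightarrow>
      rho_close C D G E1 \<psi>1 E2 \<psi>2 0 \<epsilon>w \<Longrightarrow> rho_close C D G E2 \<psi>2 E1 \<psi>1 0 \<epsilon>w \<Longrightarrow>
      norm (\<psi>1 (0, 0) - \<psi>2 (0, 0)) < \<epsilon>w \<Longrightarrow> graph_close E1 \<psi>1 E2 \<psi>2 0 \<epsilon>"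
    using rho_close_imp_graph_close[OF Q(1,2) \<open>\<epsilon> > 0\<close>] by blast
  obtain \<delta> where "\<delta> > 0" and \<delta>: "\<And>E \<phi>. is_maximal_solution C F D G E \<phi> \<Longrightarrow>
      rhoA C D G (\<phi>s (0, 0)) (\<phi> (0, 0)) < \<delta> \<Longrightarrow>
      rho_close C D G Es \<phi>s E \<phi> 0 \<epsilon>w \<and> rho_close C D G E \<phi> Es \<phi>s 0 \<epsilon>w"
    using stable_rhoD[OF stable \<open>\<epsilon>w > 0\<close>] by blast
  show "\<exists>\<delta>>0. \<forall>E \<phi>. is_maximal_solution C F D G E \<phi> \<longrightarrow> norm (\<phi>s (0, 0) - \<phi> (0, 0)) < \<delta> \<longrightarrow>
      graph_close Es \<phi>s E \<phi> 0 \<epsilon> \<and> graph_close E \<phi> Es \<phi>s 0 \<epsilon>"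
  proof (rule exI[of _ "min \<delta> \<epsilon>w"], intro conjI allI impI)
    show "min \<delta> \<epsilon>w > 0" using \<open>\<delta> > 0\<close> \<open>\<epsilon>w > 0\<close> by simp
    fix E \<phi> assume max: "is_maximal_solution C F D G E \<phi>"
      and near: "norm (\<phi>s (0, 0) - \<phi> (0, 0)) < min \<delta> \<epsilon>w"
    have solE: "is_solution C F D G E \<phi>" using max unfolding is_maximal_solution_def by blast
    have "rhoA C D G (\<phi>s (0, 0)) (\<phi> (0, 0)) < \<delta>"
      using rhoA_le_norm[OF solution_initial[OF sol]] near by (meson min.strict_boundedE le_less_trans)
    then have close: "rho_close C D G Es \<phi>s E \<phi> 0 \<epsilon>w" "rho_close C D G E \<phi> Es \<phi>s 0 \<epsilon>w"
      using \<delta>[OF max] by blast+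
    have "t_complete E" by (rule t_complete_if_rho_close[OF tc close(1)])
    then show "graph_close Es \<phi>s E \<phi> 0 \<epsilon>" "graph_close E \<phi> Es \<phi>s 0 \<epsilon>"
      using from_start[OF sol solE _ _ close] from_start[OF solE sol tc _ close(2,1)] Q(3) near
      by (simp_all add: norm_minus_commute)
  qed
qed

lemma asymptotically_stable_graphical_if_asymptotically_stable_rho:
  assumes sol: "is_solution C F D G Es \<phi>s" and tc: "t_complete Es"
    and Q: "compact Q" "Q \<subseteq> D" "near_jump_points D g Es \<phi>s \<subseteq> Q"
    and asymptotic: "asymptotically_stable_rho C F D G Es \<phi>s"
  shows "asymptotically_stable_graphical C F D G Es \<phi>s"
proof -
  obtain r where "r > 0" and r: "\<And>\<epsilon> E \<phi>. \<epsilon> > 0 \<Longrightarrow> is_maximal_solution C F D G E \<phi> \<Longrightarrow>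
      rhoA C D G (\<phi>s (0, 0)) (\<phi> (0, 0)) < r \<Longrightarrow>
      \<exists>T\<ge>0. rho_close C D G Es \<phi>s E \<phi> T \<epsilon> \<and> rho_close C D G E \<phi> Es \<phi>s T \<epsilon>"
    using asymptotically_stable_rhoD[OF asymptotic] by blast
  have "stable_rho C F D G Es \<phi>s" using asymptotic unfolding asymptotically_stable_rho_def by blast
  then have stable: "stable_graphical C F D G Es \<phi>s"
    by (rule stable_graphical_if_stable_rho[OF sol tc Q])
  show ?thesis
  proof (rule asymptotically_stable_graphicalI[OF stable \<open>r > 0\<close>])
    fix \<epsilon> :: real and E \<phi>
    assume "\<epsilon> > 0" and max: "is_maximal_solution C F D G E \<phi>" and near: "norm (\<phi>s (0, 0) - \<phi> (0, 0)) < r"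
    obtain \<epsilon>w \<sigma> where "\<epsilon>w > 0" "\<sigma> > 0" and eventually: "\<And>E1 \<psi>1 E2 \<psi>2 T0. is_solution C F D G E1 \<psi>1 \<Longrightarrow>
        is_solution C F D G E2 \<psi>2 \<Longrightarrow> t_complete E2 \<Longrightarrow>
        near_jump_points D g E1 \<psi>1 \<subseteq> Q \<or> near_jump_points D g E2 \<psi>2 \<subseteq> Q \<Longrightarrow> 0 < T0 \<Longrightarrow>
        rho_close C D G E1 \<psi>1 E2 \<psi>2 T0 \<epsilon>w \<Longrightarrow> rho_close C D G E2 \<psi>2 E1 \<psi>1 T0 \<epsilon>w \<Longrightarrow>
        graph_close E1 \<psi>1 E2 \<psi>2 (T0 + \<sigma>) \<epsilon>"
      and "\<And>E1 \<psi>1 E2 \<psi>2. is_solution C F D G E1 \<psi>1 \<Longrightarrow> is_solution C F D G E2 \<psi>2 \<Longrightarrow> t_complete E2 \<Longrightarrow>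
        near_jump_points D g E1 \<psi>1 \<subseteq> Q \<or> near_jump_points D g E2 \<psi>2 \<subseteq> Q \<Longrightarrow>
        rho_close C D G E1 \<psi>1 E2 \<psi>2 0 \<epsilon>w \<Longrightarrow> rho_close C D G E2 \<psi>2 E1 \<psi>1 0 \<epsilon>w \<Longrightarrow>
        norm (\<psi>1 (0, 0) - \<psi>2 (0, 0)) < \<epsilon>w \<Longrightarrow> graph_close E1 \<psi>1 E2 \<psi>2 0 \<epsilon>"
      using rho_close_imp_graph_close[OF Q(1,2) \<open>\<epsilon> > 0\<close>] by blast
    have solE: "is_solution C F D G E \<phi>" using max unfolding is_maximal_solution_def by blast
    have "rhoA C D G (\<phi>s (0, 0)) (\<phi> (0, 0)) < r"
      using rhoA_le_norm[OF solution_initial[OF sol]] near by (rule le_less_trans)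
    then obtain T where "T \<ge> 0" "rho_close C D G Es \<phi>s E \<phi> T \<epsilon>w" "rho_close C D G E \<phi> Es \<phi>s T \<epsilon>w"
      using r[OF \<open>\<epsilon>w > 0\<close> max] by blast
    \<comment> \<open>Start one time unit later, so that no closeness of the initial states is needed.\<close>
    then have close: "rho_close C D G Es \<phi>s E \<phi> (T + 1) \<epsilon>w" "rho_close C D G E \<phi> Es \<phi>s (T + 1) \<epsilon>w"
      unfolding rho_close_def by auto
    have "t_complete E" by (rule t_complete_if_rho_close[OF tc close(1)])
    then have "graph_close Es \<phi>s E \<phi> (T + 1 + \<sigma>) \<epsilon> \<and> graph_close E \<phi> Es \<phi>s (T + 1 + \<sigma>) \<epsilon>"
      using eventually[OF sol solE _ _ _ close] eventually[OF solE sol tc _ _ close(2,1)] Q(3) \<open>T \<ge> 0\<close>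
      by simp
    then show "\<exists>T\<ge>0. graph_close Es \<phi>s E \<phi> T \<epsilon> \<and> graph_close E \<phi> Es \<phi>s T \<epsilon>"
      using \<open>T \<ge> 0\<close> \<open>\<sigma> > 0\<close> by (intro exI[of _ "T + 1 + \<sigma>"]) simp
  qed
qed

end

theorem theorem2:
  fixes C D :: "'a::euclidean_space set"
    and F G :: "'a \<Rightarrow> 'a set"
    and Es :: "(real \<times> nat) set" and \<phi>s :: "real \<times> nat \<Rightarrow> 'a"
  assumes hbc: "hybrid_basic_conditions C F D G"
    and sol: "is_solution C F D G Es \<phi>s"
    and tc: "t_complete Es"
    and i1: "jump_image D G \<inter> D = {}"
    and i2: "jump_image D G \<subseteq> C"
    and i3: "\<forall>x\<in>D. \<exists>y. G x = {y}"
    and i4: "\<forall>K. compact K \<longrightarrow> compact {x\<in>D. G x \<inter> K \<noteq> {}}"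
    and ii: "\<forall>x\<in>C \<inter> D. F x \<inter> tangent_cone C x = {}"
    and iii: "\<forall>x\<in>C \<inter> jump_image D G. uminus ` F x \<inter> tangent_cone C x = {}"
    and iv: "bounded D \<or> bounded_arc Es \<phi>s"
  shows "(stable_rho C F D G Es \<phi>s \<longrightarrow> stable_graphical C F D G Es \<phi>s) \<and>
         (asymptotically_stable_rho C F D G Es \<phi>s \<longrightarrow> asymptotically_stable_graphical C F D G Es \<phi>s)"
proof -
  obtain g where g: "\<And>x. x \<in> D \<Longrightarrow> G x = {g x}" using bchoice[OF i3] by blast
  have "g x \<notin> D" if "x \<in> D" for x
    using i1 g[OF that] that unfolding jump_image_def by blast
  moreover have "uminus ` F (g x) \<inter> tangent_cone C (g x) = {}" if "x \<in> D" "g x \<in> C" for x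
    using iii g[OF that(1)] that unfolding jump_image_def by blast
  moreover have "F x \<inter> tangent_cone C x = {}" if "x \<in> C" "x \<in> D" for x using ii that by blast
  ultimately interpret transversal_system C D F G g
    using hbc i4 g unfolding hybrid_basic_conditions_def by unfold_locales auto
  obtain Q where "compact Q" "Q \<subseteq> D" "near_jump_points D g Es \<phi>s \<subseteq> Q"
    using near_jump_points_compact_cover[OF iv] by blast
  then show ?thesis
    using stable_graphical_if_stable_rho[OF sol tc] asymptotically_stable_graphical_if_asymptotically_stable_rho[OF sol tc]
    by blast
qed

end
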